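(* Let $A$ and $B$ be finite commutative groups and let $p_1,\dots,p_t$ be the distinct prime divisors of $|A|\,|B|$. For $i=1,\dots,t$ let $A_i$ and $B_i$ denote the (possibly trivial) $p_i$-primary components of $A$ and $B$, so that $A=A_1\times\cdots\times A_t$ and $B=B_1\times\cdots\times B_t$. Suppose $A_i=\mathbb{Z}_{q_{i,1}}\times\cdots\times\mathbb{Z}_{q_{i,n_i}}$ with each $q_{i,k}$ a power of $p_i$ ($n_i\ge 0$), and put $n=n_1+\cdots+n_t$, so that $A=(\mathbb{Z}_{q_{1,1}}\times\cdots\times\mathbb{Z}_{q_{1,n_1}})\times\cdots\times(\mathbb{Z}_{q_{t,1}}\times\cdots\times\mathbb{Z}_{q_{t,n_t}})$; attach one variable to each of these $n$ cyclic factors, the variables $X_{n_1+\cdots+n_{i-1}+1},\dots,X_{n_1+\cdots+n_i}$ belonging to $A_i$. Then $$B\binom{X_1,\dots,X_n}{A}=B_1\binom{X_1,\dots,X_{n_1}}{A_1}\times\cdots\times B_t\binom{X_{n-n_t+1},\dots,X_n}{A_t},$$ i.e. a $B$-polyfract $P=(P_1,\dots,P_t)$ (with $P_i$ a $B_i$-polyfract) has the periodicity given by $A$ if and only if each $P_i$ involves only the variables belonging to $A_i$ and is periodic with respect to $A_i$. Moreover, the set of maps $A\to B$ induced by these periodic polyfracts is exactly $$\{(a_1,\dots,a_t)\mapsto (f_1(a_1),\dots,f_t(a_t)) \;:\; f_1\in B_1^{A_1},\dots,f_t\in B_t^{A_t}\}.$$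
   Context: Notation: $\mathbb{Z}_r=\mathbb{Z}/r\mathbb{Z}$, with $\mathbb{Z}_0=\mathbb{Z}$ and $\mathbb{Z}_1=\{0\}$. For $\delta\in\mathbb{N}$, $\binom{X}{\delta}=X(X-1)\cdots(X-\delta+1)/\delta!$ and $\binom{X}{0}=1$; for $\delta\in\mathbb{N}^n$ the monofract is $\binom{X_1,\dots,X_n}{\delta_1,\dots,\delta_n}=\prod_{j}\binom{X_j}{\delta_j}$. For a finitely generated commutative group $B$, a $B$-polyfract in $X_1,\dots,X_n$ is a formal finite sum $P=\sum_{\delta\in\mathbb{N}^n}P_\delta\binom{X_1,\dots,X_n}{\delta_1,\dots,\delta_n}$ with coefficients $P_\delta\in B$; it is evaluated at $x\in\mathbb{Z}^n$ by $P(x)=\sum_\delta \big(\prod_j\binom{x_j}{\delta_j}\big)P_\delta\in B$ (integer multiples in $B$). The set of these is $B\binom{X_1,\dots,X_n}{\mathbb{Z}^n}$; if $B=B'\times B''$, a $B$-polyfract is identified with the pair of its coordinate polyfracts. For positive integers $q_1,\dots,q_n$, $B\binom{X_1,\dots,X_n}{\mathbb{Z}_{q_1}\times\cdots\times\mathbb{Z}_{q_n}}$ denotes the set of $B$-polyfracts $P$ whose evaluation map $\mathbb{Z}^n\to B$ is $q_j$-periodic in the $j$-th coordinate for every $j$; such a map is identified with the induced map $\mathbb{Z}_{q_1}\times\cdots\times\mathbb{Z}_{q_n}\to B$. When the domain is written as a product $A$ of cyclic groups, $B\binom{X_1,\dots,X_n}{A}$ means this set for the corresponding $q_j$. *)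

theory Defs
  imports "HOL-Computational_Algebra.Primes" "HOL-Library.FuncSet"
begin

definition intmul :: "int \<Rightarrow> 'b::ab_group_add \<Rightarrow> 'b" where
  "intmul m b = (if 0 \<le> m then (\<Sum>_<nat m. b) else - (\<Sum>_<nat (- m). b))"

definition int_binom :: "int \<Rightarrow> nat \<Rightarrow> int" where
  "int_binom x d = (\<Prod>i<d. x - int i) div fact d"

text \<open>Coefficient maps of polyfracts in n variables: delta (a list of length n)
  mapsto the coefficient; finitely many nonzero coefficients.\<close>
definition polyfract :: "nat \<Rightarrow> (nat list \<Rightarrow> 'b::ab_group_add) \<Rightarrow> bool" where
  "polyfract n C \<longleftrightarrow> finite {d. C d \<noteq> 0} \<and> (\<forall>d. C d \<noteq> 0 \<longrightarrow> length d = n)"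

definition peval :: "(nat list \<Rightarrow> 'b::ab_group_add) \<Rightarrow> int list \<Rightarrow> 'b" where
  "peval C x = (\<Sum>d\<in>{d. C d \<noteq> 0}. intmul (\<Prod>j<length x. int_binom (x!j) (d!j)) (C d))"

definition periodic_pf :: "nat list \<Rightarrow> (nat list \<Rightarrow> 'b::ab_group_add) \<Rightarrow> bool" where
  "periodic_pf qs C \<longleftrightarrow> polyfract (length qs) C \<and>
     (\<forall>x j. length x = length qs \<longrightarrow> j < length qs \<longrightarrow>
        peval C (x[j := x!j + int (qs!j)]) = peval C x)"

text \<open>Representatives of Z_{q_1} x ... x Z_{q_n}.\<close>
definition Arep :: "nat list \<Rightarrow> int list set" where
  "Arep qs = {x. length x = length qs \<and> (\<forall>j<length qs. 0 \<le> x!j \<and> x!j < int (qs!j))}"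

definition prim :: "nat \<Rightarrow> 'b::ab_group_add set" where
  "prim p = {b. \<exists>k. intmul (int (p ^ k)) b = 0}"

text \<open>i-th coordinate of b under B = B_1 x ... x B_t (B_j the ps!j-primary component).\<close>
definition pproj :: "nat list \<Rightarrow> nat \<Rightarrow> 'b::ab_group_add \<Rightarrow> 'b" where
  "pproj ps i b = (THE c. \<exists>cs. length cs = length ps \<and> (\<forall>j<length ps. cs!j \<in> prim (ps!j))
                     \<and> sum_list cs = b \<and> c = cs!i)"

definition coordC :: "nat list \<Rightarrow> nat \<Rightarrow> (nat list \<Rightarrow> 'b::ab_group_add) \<Rightarrow> nat list \<Rightarrow> 'b" where
  "coordC ps i C = (\<lambda>d. pproj ps i (C d))"

text \<open>Offset of block i (the variables belonging to A_i are indices off..<off+length (Q!i)).\<close>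
definition off :: "nat list list \<Rightarrow> nat \<Rightarrow> nat" where
  "off Q i = sum_list (map length (take i Q))"

definition blockvars :: "nat list list \<Rightarrow> nat \<Rightarrow> nat set" where
  "blockvars Q i = {off Q i ..< off Q i + length (Q!i)}"

definition only_block :: "nat list list \<Rightarrow> nat \<Rightarrow> (nat list \<Rightarrow> 'b::zero) \<Rightarrow> bool" where
  "only_block Q i C \<longleftrightarrow> (\<forall>d. C d \<noteq> 0 \<longrightarrow> (\<forall>j<length d. j \<notin> blockvars Q i \<longrightarrow> d!j = 0))"

definition blockC :: "nat list list \<Rightarrow> nat \<Rightarrow> (nat list \<Rightarrow> 'b::zero) \<Rightarrow> nat list \<Rightarrow> 'b" where
  "blockC Q i C = (\<lambda>d'. if length d' = length (Q!i)
      then C (replicate (off Q i) 0 @ d' @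
              replicate (length (concat Q) - off Q i - length (Q!i)) 0)
      else 0)"

definition blockx :: "nat list list \<Rightarrow> nat \<Rightarrow> int list \<Rightarrow> int list" where
  "blockx Q i x = take (length (Q!i)) (drop (off Q i) x)"

end

theory Submission
  imports Defs "HOL.Binomial_Plus"
begin

text \<open>Multiplication by an integer \<open>E\<^sub>i\<close> with \<open>E\<^sub>i \<equiv> 1\<close> modulo the \<open>p\<^sub>i\<close>-part of \<open>|B|\<close> and \<open>E\<^sub>i \<equiv> 0\<close>
  modulo the cofactor projects \<open>B\<close> onto \<open>B\<^sub>i\<close>, so the coordinate polyfracts \<open>P\<^sub>i\<close> of a periodic \<open>P\<close>
  are periodic. The coefficients of \<open>P\<^sub>i\<close> are killed by a power of \<open>p\<^sub>i\<close>, which makes \<open>P\<^sub>i\<close>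
  periodic in every variable with a period that is a power of \<open>p\<^sub>i\<close>, because \<open>(x + p\<^sup>N choose k)\<close>
  and \<open>(x choose k)\<close> are congruent modulo a high power of \<open>p\<close> for \<open>k\<close> small. In a variable of another
  block it has a coprime period as well, hence period \<open>1\<close>; a polyfract invariant under
  \<open>X\<^sub>j \<mapsto> X\<^sub>j + 1\<close> does not involve \<open>X\<^sub>j\<close>, since its coefficients are recovered from its values
  on \<open>\<nat>\<^sup>n\<close>. Conversely a sum of periodic functions of the separate blocks is periodic.

  For the induced maps it remains to realise every map \<open>\<int>\<^sub>q\<^sub>1 \<times> \<dots> \<times> \<int>\<^sub>q\<^sub>n \<rightarrow> B\<^sub>i\<close> by a
  periodic polyfract. The indicator of a residue class modulo \<open>p\<^sup>e\<close> agrees modulo \<open>p\<^sup>M\<close> with a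
  truncation of its Newton series, because the difference operator is nilpotent modulo \<open>p\<close> on
  \<open>p\<^sup>e\<close>-periodic functions; products of such polynomials interpolate the point indicators.\<close>

section \<open>Integer multiples in a commutative group\<close>

lemma intmul_zero_left [simp]: "intmul 0 b = 0"
  by (simp add: intmul_def)

lemma intmul_zero_right [simp]: "intmul m (0::'b::ab_group_add) = 0"
  by (simp add: intmul_def)

lemma intmul_add_one: "intmul (m + 1) b = intmul m b + b"
proof (cases "0 \<le> m")
  case True
  then have "nat (m + 1) = Suc (nat m)" by simp
  with True show ?thesis by (simp add: intmul_def)
next
  case False
  show ?thesis
  proof (cases "m = -1")
    case False
    with \<open>\<not> 0 \<le> m\<close> have "nat (- m) = Suc (nat (- (m + 1)))" by simp
    with \<open>\<not> 0 \<le> m\<close> False show ?thesis by (simp add: intmul_def)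
  qed (simp add: intmul_def)
qed

lemma intmul_diff_one: "intmul (m - 1) b = intmul m b - b"
  using intmul_add_one[of "m - 1" b] by simp

lemma intmul_one_left [simp]: "intmul 1 b = b"
  using intmul_add_one[of 0 b] by simp

lemma intmul_add_left: "intmul (m + k) b = intmul m b + intmul k b"
proof (induct k rule: int_induct[where k = 0])
  case (step1 i)
  then show ?case
    using intmul_add_one[of "m + i" b] intmul_add_one[of i b] by (simp add: add.assoc[symmetric])
next
  case (step2 i)
  have "intmul (m + (i - 1)) b = intmul (m + i - 1) b"
    by (simp add: algebra_simps)
  also have "\<dots> = intmul m b + intmul i b - b"
    using step2 by (simp add: intmul_diff_one)
  finally show ?case
    by (simp add: intmul_diff_one add_diff_eq)
qed simp

lemma intmul_minus_left: "intmul (- m) b = - intmul m b"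
  using intmul_add_left[of m "- m" b] by (simp add: eq_neg_iff_add_eq_0 add.commute)

lemma intmul_diff_left: "intmul (m - k) b = intmul m b - intmul k b"
  using intmul_add_left[of m "- k" b] intmul_minus_left[of k b] by simp

lemma intmul_add_right: "intmul m (a + c) = intmul m a + intmul m c"
proof (induct m rule: int_induct[where k = 0])
  case (step1 i)
  then show ?case by (simp only: intmul_add_one) (simp add: algebra_simps)
next
  case (step2 i)
  then show ?case by (simp only: intmul_diff_one) (simp add: algebra_simps)
qed simp

lemma intmul_mult: "intmul (m * k) b = intmul m (intmul k b)"
proof (induct m rule: int_induct[where k = 0])
  case (step1 i)
  then show ?case by (simp only: distrib_right intmul_add_left intmul_add_one) simp
next
  case (step2 i)
  then show ?case by (simp only: left_diff_distrib intmul_diff_left intmul_diff_one) simp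
qed simp

lemma intmul_sum_left: "intmul (\<Sum>i\<in>A. f i) b = (\<Sum>i\<in>A. intmul (f i) b)"
  by (induct A rule: infinite_finite_induct) (auto simp: intmul_add_left)

lemma intmul_sum_right: "intmul m (\<Sum>i\<in>A. f i) = (\<Sum>i\<in>A. intmul m (f i))"
  by (induct A rule: infinite_finite_induct) (auto simp: intmul_add_right)

lemma intmul_cong_dvd:
  assumes "intmul M b = 0" and "M dvd m - k"
  shows "intmul m b = intmul k b"
proof -
  obtain r where "m - k = r * M"
    using assms(2) by (metis dvd_def mult.commute)
  then have "intmul (m - k) b = intmul r (intmul M b)"
    by (simp add: intmul_mult)
  with assms(1) show ?thesis
    by (simp add: intmul_diff_left)
qed

lemma intmul_card: "finite A \<Longrightarrow> intmul (int (card A)) b = (\<Sum>x\<in>A. b)"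
proof (induct A rule: finite_induct)
  case (insert x F)
  then show ?case
    using intmul_add_one[of "int (card F)" b] by (simp add: add.commute)
qed simp

text \<open>Translating by \<open>b\<close> permutes the group; compare the sums of all elements.\<close>
lemma intmul_card_UNIV:
  fixes b :: "'b::{ab_group_add, finite}"
  shows "intmul (int (card (UNIV :: 'b set))) b = 0"
proof -
  have "(\<Sum>x\<in>(UNIV::'b set). x) = (\<Sum>x\<in>UNIV. x + b)"
    by (rule sum.reindex_bij_witness[of _ "\<lambda>x. x + b" "\<lambda>x. x - b"]) auto
  also have "\<dots> = (\<Sum>x\<in>UNIV. x) + (\<Sum>x\<in>(UNIV::'b set). b)"
    by (rule sum.distrib)
  finally show ?thesis
    using intmul_card[of "UNIV::'b set" b] by simp
qed

section \<open>Polyfracts and their evaluation\<close>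

lemma int_binom_0 [simp]: "int_binom x 0 = 1"
  by (simp add: int_binom_def)

lemma int_binom_add_one_Suc: "int_binom (x + 1) (Suc k) = int_binom x k + int_binom x (Suc k)"
  using gbinomial_int_Suc_Suc[of x k] by (simp add: int_binom_def gbinomial_prod_rev atLeast0LessThan)

lemma int_binom_of_nat: "int_binom (int n) k = int (n choose k)"
  using gbinomial_nneg[of "int n" k] by (simp add: int_binom_def gbinomial_prod_rev atLeast0LessThan)

definition monofract :: "int list \<Rightarrow> nat list \<Rightarrow> int" where
  "monofract x d = (\<Prod>j<length x. int_binom (x!j) (d!j))"

lemma peval_monofract: "peval C x = (\<Sum>d\<in>{d. C d \<noteq> 0}. intmul (monofract x d) (C d))"
  by (simp add: peval_def monofract_def)

lemma peval_eq_sum_superset: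
  assumes "finite S" and "{d. C d \<noteq> 0} \<subseteq> S"
  shows "peval C x = (\<Sum>d\<in>S. intmul (monofract x d) (C d))"
  unfolding peval_monofract using assms by (intro sum.mono_neutral_left) auto

lemma peval_intmul:
  assumes "finite {d. C d \<noteq> 0}"
  shows "peval (\<lambda>d. intmul E (C d)) x = intmul E (peval C x)"
proof -
  have "peval (\<lambda>d. intmul E (C d)) x = (\<Sum>d | C d \<noteq> 0. intmul (monofract x d) (intmul E (C d)))"
    by (rule peval_eq_sum_superset) (use assms in auto)
  also have "\<dots> = intmul E (peval C x)"
    by (simp add: peval_monofract intmul_sum_right intmul_mult[symmetric] mult.commute)
  finally show ?thesis .
qed

lemma support_sum_subset: "{d. (\<Sum>i\<in>I. C i d) \<noteq> 0} \<subseteq> (\<Union>i\<in>I. {d. C i d \<noteq> 0})"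
  by (auto dest: sum.not_neutral_contains_not_neutral)

lemma peval_sum:
  assumes "finite I" and "\<And>i. i \<in> I \<Longrightarrow> finite {d. C i d \<noteq> 0}"
  shows "peval (\<lambda>d. \<Sum>i\<in>I. C i d) x = (\<Sum>i\<in>I. peval (C i) x)"
proof -
  define S where "S = (\<Union>i\<in>I. {d. C i d \<noteq> 0})"
  have "finite S"
    using assms by (simp add: S_def)
  have "peval (\<lambda>d. \<Sum>i\<in>I. C i d) x = (\<Sum>d\<in>S. intmul (monofract x d) (\<Sum>i\<in>I. C i d))"
    using \<open>finite S\<close> support_sum_subset unfolding S_def by (rule peval_eq_sum_superset)
  also have "\<dots> = (\<Sum>i\<in>I. \<Sum>d\<in>S. intmul (monofract x d) (C i d))"
    by (simp add: intmul_sum_right sum.swap[of _ S])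
  also have "\<dots> = (\<Sum>i\<in>I. peval (C i) x)"
    by (intro sum.cong refl peval_eq_sum_superset[symmetric] \<open>finite S\<close>) (auto simp: S_def)
  finally show ?thesis .
qed

lemma polyfract_sum:
  assumes "finite I" and "\<And>i. i \<in> I \<Longrightarrow> polyfract n (C i)"
  shows "polyfract n (\<lambda>d. \<Sum>i\<in>I. C i d)"
  unfolding polyfract_def
proof (intro conjI allI impI)
  show "finite {d. (\<Sum>i\<in>I. C i d) \<noteq> 0}"
    by (rule finite_subset[OF support_sum_subset]) (use assms in \<open>auto simp: polyfract_def\<close>)
  fix d
  assume "(\<Sum>i\<in>I. C i d) \<noteq> 0"
  then obtain i where "i \<in> I" and "C i d \<noteq> 0"
    by (auto dest: sum.not_neutral_contains_not_neutral)
  with assms(2) show "length d = n"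
    by (auto simp: polyfract_def)
qed

lemma polyfract_intmul:
  assumes "polyfract n C"
  shows "polyfract n (\<lambda>d. intmul E (C d))"
proof -
  have "{d. intmul E (C d) \<noteq> 0} \<subseteq> {d. C d \<noteq> 0}"
    by auto
  with assms show ?thesis
    unfolding polyfract_def by (auto intro: finite_subset)
qed

lemma monofract_self: "monofract (map int d) d = 1"
  by (simp add: monofract_def int_binom_of_nat)

lemma monofract_eq_0:
  "length d = length d0 \<Longrightarrow> j < length d0 \<Longrightarrow> d0!j < d!j \<Longrightarrow> monofract (map int d0) d = 0"
  unfolding monofract_def by (rule prod_zero) (auto simp: int_binom_of_nat intro!: bexI[where x = j])

text \<open>Evaluating at a support point \<open>d\<^sub>0\<close> of minimal total degree isolates the coefficient \<open>C d\<^sub>0\<close>.\<close>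
lemma polyfract_coeff_eq_0:
  assumes pf: "polyfract n C"
    and vanish: "\<And>x. length x = n \<Longrightarrow> (\<forall>j<n. 0 \<le> x!j) \<Longrightarrow> peval C x = 0"
  shows "C d = 0"
proof (rule ccontr)
  assume "C d \<noteq> 0"
  define S where "S = {d. C d \<noteq> 0}"
  have "finite S" and len_S: "\<And>d. d \<in> S \<Longrightarrow> length d = n"
    using pf by (auto simp: polyfract_def S_def)
  obtain d0 where "d0 \<in> S" and d0_min: "\<And>d. d \<in> S \<Longrightarrow> sum_list d0 \<le> sum_list d"
    using ex_has_least_nat[of "\<lambda>d. d \<in> S" d sum_list] \<open>C d \<noteq> 0\<close> by (auto simp: S_def)
  have len_d0: "length d0 = n"
    using len_S \<open>d0 \<in> S\<close> by auto
  have others: "monofract (map int d0) d = 0" if "d \<in> S - {d0}" for d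
  proof (cases "\<exists>j<n. d0!j < d!j")
    case True
    with that len_S len_d0 show ?thesis
      by (auto intro: monofract_eq_0)
  next
    case False
    have len_d: "length d = n"
      using that len_S by auto
    with that len_d0 obtain j where "j < n" and "d!j \<noteq> d0!j"
      using nth_equalityI by (metis DiffE singletonI)
    with False have "d!j < d0!j"
      by (metis not_less le_neq_implies_less)
    with False \<open>j < n\<close> have "(\<Sum>i<n. d!i) < (\<Sum>i<n. d0!i)"
      by (intro sum_strict_mono_ex1) (auto simp: not_less dest: leD)
    then have "sum_list d < sum_list d0"
      using len_d len_d0 by (simp add: sum_list_sum_nth atLeast0LessThan)
    with d0_min that show ?thesis
      by force
  qed
  have "peval C (map int d0) = (\<Sum>d\<in>S. intmul (monofract (map int d0) d) (C d))"
    by (simp add: peval_monofract S_def)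
  also have "\<dots> = intmul (monofract (map int d0) d0) (C d0)"
    using \<open>finite S\<close> \<open>d0 \<in> S\<close> others by (simp add: sum.remove)
  finally have "peval C (map int d0) = C d0"
    by (simp add: monofract_self)
  moreover have "peval C (map int d0) = 0"
    using vanish len_d0 by simp
  ultimately show False
    using \<open>d0 \<in> S\<close> by (simp add: S_def)
qed

definition monofract_except :: "int list \<Rightarrow> nat list \<Rightarrow> nat \<Rightarrow> int" where
  "monofract_except x d j = (\<Prod>l\<in>{..<length x} - {j}. int_binom (x!l) (d!l))"

lemma monofract_split:
  "j < length x \<Longrightarrow> monofract x d = int_binom (x!j) (d!j) * monofract_except x d j"
  unfolding monofract_def monofract_except_def by (rule prod.remove) auto

lemma monofract_except_update_point: "monofract_except (x[j := v]) d j = monofract_except x d j"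
  unfolding monofract_except_def by (rule prod.cong) auto

lemma monofract_except_update_degree:
  "j < length d \<Longrightarrow> monofract_except x (d[j := k]) j = monofract_except x d j"
  unfolding monofract_except_def by (rule prod.cong) auto

lemma monofract_update:
  assumes "j < length x"
  shows "monofract (x[j := v]) d = int_binom v (d!j) * monofract_except x d j"
  using monofract_split[of j "x[j := v]" d] assms by (simp add: monofract_except_update_point)

text \<open>The coefficients of the forward difference \<open>\<Delta>\<^sub>j C\<close>: since
  \<open>\<Delta> (X choose k) = X choose (k - 1)\<close>, the coefficient of \<open>d\<close> in \<open>\<Delta>\<^sub>j C\<close> is that of \<open>d + e\<^sub>j\<close> in \<open>C\<close>.\<close>
definition coeff_shift :: "nat \<Rightarrow> (nat list \<Rightarrow> 'b) \<Rightarrow> nat list \<Rightarrow> 'b" where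
  "coeff_shift j C = (\<lambda>d. C (d[j := Suc (d!j)]))"

lemma support_coeff_shift:
  assumes "polyfract n C" and "j < n"
  shows "{d. coeff_shift j C d \<noteq> 0} = (\<lambda>d. d[j := d!j - 1]) ` {d. C d \<noteq> 0 \<and> d!j \<noteq> 0}"
proof (intro set_eqI iffI)
  fix d
  assume "d \<in> {d. coeff_shift j C d \<noteq> 0}"
  then have "C (d[j := Suc (d!j)]) \<noteq> 0"
    by (simp add: coeff_shift_def)
  moreover from this have "length d = n"
    using assms(1) by (auto simp: polyfract_def)
  ultimately show "d \<in> (\<lambda>d. d[j := d!j - 1]) ` {d. C d \<noteq> 0 \<and> d!j \<noteq> 0}"
    using assms(2) by (intro image_eqI[of _ _ "d[j := Suc (d!j)]"]) auto
next
  fix d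
  assume "d \<in> (\<lambda>d. d[j := d!j - 1]) ` {d. C d \<noteq> 0 \<and> d!j \<noteq> 0}"
  then obtain e where "d = e[j := e!j - 1]" and "C e \<noteq> 0" and "e!j \<noteq> 0"
    by auto
  moreover from this have "length e = n"
    using assms(1) by (auto simp: polyfract_def)
  ultimately show "d \<in> {d. coeff_shift j C d \<noteq> 0}"
    using assms(2) by (simp add: coeff_shift_def)
qed

lemma polyfract_coeff_shift:
  assumes "polyfract n C" and "j < n"
  shows "polyfract n (coeff_shift j C)"
  using assms support_coeff_shift[OF assms]
  by (auto simp: polyfract_def coeff_shift_def)

lemma peval_forward_diff:
  fixes C :: "nat list \<Rightarrow> 'b::ab_group_add"
  assumes pf: "polyfract n C" and "j < n" and "length x = n"
  shows "peval C (x[j := x!j + 1]) - peval C x = peval (coeff_shift j C) x"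
proof -
  define S where "S = {d. C d \<noteq> 0}"
  define S1 where "S1 = {d\<in>S. d!j \<noteq> 0}"
  define lower where "lower = (\<lambda>d::nat list. d[j := d!j - 1])"
  have "finite S" and len_S: "\<And>d. d \<in> S \<Longrightarrow> length d = n"
    using pf by (auto simp: polyfract_def S_def)
  have jx: "j < length x"
    using assms by simp
  have term_diff: "intmul (monofract (x[j := x!j + 1]) d - monofract x d) (C d)
      = (if d!j = 0 then 0 else intmul (monofract x (lower d)) (C d))" if "d \<in> S" for d
  proof (cases "d!j")
    case (Suc k)
    have "monofract x (lower d) = int_binom (x!j) k * monofract_except x d j"
      using monofract_split[of j x "lower d"] jx len_S[OF that] \<open>j < n\<close> Suc
      by (simp add: lower_def monofract_except_update_degree)
    moreover have "int_binom (x!j + 1) (Suc k) - int_binom (x!j) (Suc k) = int_binom (x!j) k"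
      by (simp add: int_binom_add_one_Suc)
    ultimately show ?thesis
      using monofract_update[OF jx, of "x!j + 1" d] monofract_split[OF jx, of d] Suc
      by (simp add: right_diff_distrib[symmetric] mult.commute)
  qed (simp add: monofract_update[OF jx] monofract_split[OF jx])
  have inj: "inj_on lower S1"
    by (rule inj_on_inverseI[where g = "\<lambda>d. d[j := Suc (d!j)]"])
      (use len_S \<open>j < n\<close> in \<open>auto simp: S1_def S_def lower_def\<close>)
  have shift_lower: "coeff_shift j C (lower d) = C d" if "d \<in> S1" for d
    using that len_S \<open>j < n\<close> by (auto simp: S1_def S_def lower_def coeff_shift_def)
  have "peval C (x[j := x!j + 1]) - peval C x
      = (\<Sum>d\<in>S. intmul (monofract (x[j := x!j + 1]) d - monofract x d) (C d))"
    by (simp add: peval_monofract S_def intmul_diff_left sum_subtractf)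
  also have "\<dots> = (\<Sum>d\<in>S. if d!j \<noteq> 0 then intmul (monofract x (lower d)) (C d) else 0)"
    using term_diff by (intro sum.cong) auto
  also have "\<dots> = (\<Sum>d\<in>S1. intmul (monofract x (lower d)) (C d))"
    unfolding S1_def using \<open>finite S\<close> by (rule sum.inter_filter[symmetric])
  also have "\<dots> = (\<Sum>d\<in>lower ` S1. intmul (monofract x d) (coeff_shift j C d))"
    by (simp add: sum.reindex[OF inj] shift_lower)
  also have "\<dots> = peval (coeff_shift j C) x"
    using \<open>finite S\<close> support_coeff_shift[OF pf \<open>j < n\<close>]
    by (intro peval_eq_sum_superset[symmetric]) (auto simp: S1_def S_def lower_def)
  finally show ?thesis .
qed

text \<open>The forward difference in \<open>X\<^sub>j\<close> vanishes, so all shifted coefficients are zero.\<close>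
lemma invariant_imp_var_absent:
  fixes C :: "nat list \<Rightarrow> 'b::ab_group_add"
  assumes pf: "polyfract n C" and "j < n"
    and inv: "\<And>x. length x = n \<Longrightarrow> peval C (x[j := x!j + 1]) = peval C x"
    and "C d \<noteq> 0"
  shows "d!j = 0"
proof (rule ccontr)
  assume "d!j \<noteq> 0"
  have "coeff_shift j C e = 0" for e
    by (rule polyfract_coeff_eq_0[OF polyfract_coeff_shift[OF pf \<open>j < n\<close>]])
      (simp add: inv peval_forward_diff[OF pf \<open>j < n\<close>, symmetric])
  moreover have "coeff_shift j C (d[j := d!j - 1]) = C d"
    using \<open>d!j \<noteq> 0\<close> \<open>C d \<noteq> 0\<close> pf \<open>j < n\<close> by (auto simp: coeff_shift_def polyfract_def)
  ultimately show False
    using \<open>C d \<noteq> 0\<close> by simp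
qed

section \<open>Residue classes modulo prime powers as integer-valued polynomials\<close>

lemma prime_power_dvd_binomial:
  fixes p :: nat
  assumes p: "prime p" and "0 < i" and "i < p ^ K" and "M + K \<le> N + 1"
  shows "p ^ M dvd (p ^ N choose i)"
proof (cases "M = 0")
  case False
  define C where "C = p ^ N choose i"
  have "p ^ K \<le> p ^ N"
    using False assms(4) p by (simp add: prime_gt_Suc_0_nat power_increasing)
  then have "C \<noteq> 0"
    using \<open>i < p ^ K\<close> by (simp add: C_def)
  have not_unit: "\<not> is_unit p"
    using p not_prime_unit by blast
  have "i * C = p ^ N * ((p ^ N - 1) choose (i - 1))"
    using times_binomial_minus1_eq[OF \<open>0 < i\<close>] by (simp add: C_def)
  then have "p ^ N dvd i * C"
    by simp
  then have "N \<le> multiplicity p i + multiplicity p C"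
    using power_dvd_iff_le_multiplicity[of "i * C" p N] prime_elem_multiplicity_mult_distrib[of p i C]
      not_unit p \<open>C \<noteq> 0\<close> \<open>0 < i\<close> by simp
  moreover have "\<not> p ^ K dvd i"
    using \<open>0 < i\<close> \<open>i < p ^ K\<close> by (auto dest: dvd_imp_le)
  then have "multiplicity p i < K"
    using power_dvd_iff_le_multiplicity[of i p K] not_unit \<open>0 < i\<close> by simp
  ultimately have "M \<le> multiplicity p C"
    using assms(4) by linarith
  then show ?thesis
    unfolding C_def by (rule multiplicity_dvd')
qed simp

definition fwd_diff :: "(int \<Rightarrow> int) \<Rightarrow> int \<Rightarrow> int" where
  "fwd_diff h = (\<lambda>t. h (t + 1) - h t)"

lemma fwd_diff_funpow_Suc: "(fwd_diff ^^ Suc i) h t = (fwd_diff ^^ i) h (t + 1) - (fwd_diff ^^ i) h t"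
  by (simp add: fwd_diff_def)

lemma newton_forward_expansion:
  "h (x + int n) = (\<Sum>i\<le>n. int (n choose i) * (fwd_diff ^^ i) h x)"
proof (induct n arbitrary: h)
  case (Suc n)
  have pascal: "(\<Sum>i\<le>Suc n. int (Suc n choose i) * a i)
      = (\<Sum>i\<le>n. int (n choose i) * a i) + (\<Sum>i\<le>n. int (n choose i) * a (Suc i))" for a :: "nat \<Rightarrow> int"
  proof -
    have "(\<Sum>i\<le>Suc n. int (Suc n choose i) * a i)
        = a 0 + (\<Sum>i\<le>n. int (n choose Suc i) * a (Suc i)) + (\<Sum>i\<le>n. int (n choose i) * a (Suc i))"
      by (subst sum.atMost_Suc_shift) (simp add: sum.distrib algebra_simps)
    moreover have "(\<Sum>i\<le>n. int (n choose i) * a i) = a 0 + (\<Sum>i\<le>n. int (n choose Suc i) * a (Suc i))"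
    proof -
      have "(\<Sum>i\<le>n. int (n choose i) * a i) = (\<Sum>i\<le>Suc n. int (n choose i) * a i)"
        by simp
      also have "\<dots> = a 0 + (\<Sum>i\<le>n. int (n choose Suc i) * a (Suc i))"
        by (subst sum.atMost_Suc_shift) simp
      finally show ?thesis .
    qed
    ultimately show ?thesis
      by linarith
  qed
  have "h (x + int (Suc n)) = h (x + int n) + fwd_diff h (x + int n)"
    by (simp add: fwd_diff_def algebra_simps)
  also have "\<dots> = (\<Sum>i\<le>n. int (n choose i) * (fwd_diff ^^ i) h x)
      + (\<Sum>i\<le>n. int (n choose i) * (fwd_diff ^^ Suc i) h x)"
    using Suc[of h] Suc[of "fwd_diff h"] by (simp add: funpow_Suc_right del: funpow.simps)
  also have "\<dots> = (\<Sum>i\<le>Suc n. int (Suc n choose i) * (fwd_diff ^^ i) h x)"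
    by (rule pascal[symmetric])
  finally show ?case .
qed simp

lemma fwd_diff_funpow_periodic:
  assumes "\<And>t. h (t + T) = h t"
  shows "(fwd_diff ^^ i) h (t + T) = (fwd_diff ^^ i) h t"
proof (induct i arbitrary: t)
  case (Suc i)
  have "t + T + 1 = t + 1 + T"
    by (simp add: ac_simps)
  with Suc show ?case
    by (simp only: fwd_diff_funpow_Suc)
qed (simp add: assms)

lemma fwd_diff_funpow_int_binom:
  "(fwd_diff ^^ i) (\<lambda>t. int_binom t k) t = (if i \<le> k then int_binom t (k - i) else 0)"
proof (induct i arbitrary: t)
  case (Suc i)
  show ?case
  proof (cases "Suc i \<le> k")
    case True
    then have "k - i = Suc (k - Suc i)"
      by simp
    with True Suc show ?thesis
      by (simp only: fwd_diff_funpow_Suc) (simp add: int_binom_add_one_Suc)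
  qed (simp only: fwd_diff_funpow_Suc Suc, simp)
qed simp

text \<open>The forward difference operator is topologically nilpotent modulo \<open>p\<close> on \<open>p\<^sup>e\<close>-periodic
  functions: applying \<open>\<Delta>\<^bsup>p\<^sup>e\<^esup>\<close> to \<open>h = h(\<cdot> + p\<^sup>e)\<close> and expanding by Newton's formula expresses
  \<open>\<Delta>\<^bsup>p\<^sup>e\<^esup> h\<close> through lower differences with coefficients \<open>p\<^sup>e choose i\<close>, all divisible by \<open>p\<close>.\<close>
lemma fwd_diff_funpow_prime_power_dvd:
  fixes p :: nat and h :: "int \<Rightarrow> int"
  assumes p: "prime p" and per: "\<And>t. h (t + int (p ^ e)) = h t"
  shows "r * p ^ e \<le> k \<Longrightarrow> int p ^ r dvd (fwd_diff ^^ k) h t"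
proof (induct r arbitrary: k t)
  case (Suc r)
  define q where "q = p ^ e"
  have "1 \<le> q"
    using p by (simp add: q_def prime_gt_0_nat Suc_leI)
  have "q \<le> k"
    using Suc.prems by (simp add: q_def)
  define h' where "h' = (fwd_diff ^^ (k - q)) h"
  have h'_funpow: "(fwd_diff ^^ i) h' = (fwd_diff ^^ (i + (k - q))) h" for i
    by (simp add: h'_def funpow_add)
  have "h' t = h' (t + int q)"
    using fwd_diff_funpow_periodic[of h, OF per] by (simp add: h'_def q_def)
  also have "\<dots> = (\<Sum>i\<le>q. int (q choose i) * (fwd_diff ^^ i) h' t)"
    by (rule newton_forward_expansion)
  also have "\<dots> = h' t + (fwd_diff ^^ q) h' t + (\<Sum>i\<in>{1..<q}. int (q choose i) * (fwd_diff ^^ i) h' t)"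
  proof -
    have "{..q} = insert 0 (insert q {1..<q})" and "0 \<notin> insert q {1..<q}"
      using \<open>1 \<le> q\<close> by auto
    then show ?thesis
      by (simp add: algebra_simps)
  qed
  finally have "(fwd_diff ^^ q) h' t = - (\<Sum>i\<in>{1..<q}. int (q choose i) * (fwd_diff ^^ i) h' t)"
    by simp
  moreover have "int p ^ Suc r dvd (\<Sum>i\<in>{1..<q}. int (q choose i) * (fwd_diff ^^ i) h' t)"
  proof (rule dvd_sum)
    fix i
    assume i: "i \<in> {1..<q}"
    have "p ^ 1 dvd (p ^ e choose i)"
      by (rule prime_power_dvd_binomial[OF p, of i e]) (use i in \<open>auto simp: q_def\<close>)
    moreover have "int p ^ r dvd (fwd_diff ^^ i) h' t"
      using Suc.hyps[of "i + (k - q)"] Suc.prems \<open>q \<le> k\<close> by (simp add: h'_funpow q_def)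
    ultimately show "int p ^ Suc r dvd int (q choose i) * (fwd_diff ^^ i) h' t"
      using mult_dvd_mono[of "int p" "int (q choose i)"] by (simp add: q_def)
  qed
  ultimately show ?case
    using h'_funpow[of q] \<open>q \<le> k\<close> by simp
qed simp

lemma int_binom_shift_prime_power_cong:
  fixes p :: nat
  assumes p: "prime p" and "k < p ^ K" and "M + K \<le> N + 1"
  shows "int p ^ M dvd int_binom (x + int (p ^ N)) k - int_binom x k"
proof -
  obtain m where m: "p ^ N = Suc m"
    using p by (metis gr0_implies_Suc prime_gt_0_nat zero_less_power)
  define f where "f = (\<lambda>i. int (p ^ N choose i) * (if i \<le> k then int_binom x (k - i) else 0))"
  have "int_binom (x + int (p ^ N)) k = (\<Sum>i\<le>p ^ N. f i)"
    using newton_forward_expansion[of "\<lambda>t. int_binom t k" x "p ^ N"]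
    by (simp add: fwd_diff_funpow_int_binom f_def)
  also have "\<dots> = f 0 + (\<Sum>i\<le>m. f (Suc i))"
    by (simp only: m sum.atMost_Suc_shift)
  finally have "int_binom (x + int (p ^ N)) k - int_binom x k = (\<Sum>i\<le>m. f (Suc i))"
    by (simp add: f_def)
  also have "int p ^ M dvd \<dots>"
  proof (rule dvd_sum)
    fix i
    show "int p ^ M dvd f (Suc i)"
    proof (cases "Suc i \<le> k")
      case True
      then have "p ^ M dvd (p ^ N choose Suc i)"
        using prime_power_dvd_binomial[OF p, of "Suc i" K M N] assms by simp
      then have "int p ^ M dvd int (p ^ N choose Suc i)"
        by (metis of_nat_dvd_iff of_nat_power)
      then show ?thesis
        by (simp add: f_def)
    qed (simp add: f_def)
  qed
  finally show ?thesis .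
qed

lemma sum_int_binom_shift_prime_power_cong:
  fixes p :: nat and c :: "nat \<Rightarrow> int"
  assumes p: "prime p" and "M + K \<le> N + 1"
  shows "int p ^ M dvd (\<Sum>k<K. c k * int_binom (t + int (p ^ N)) k) - (\<Sum>k<K. c k * int_binom t k)"
proof -
  have "k < p ^ K" if "k < K" for k
    using that less_exp[of K] power_mono[of 2 p K] prime_ge_2_nat[OF p] by linarith
  then show ?thesis
    unfolding sum_subtractf[symmetric] right_diff_distrib[symmetric]
    by (intro dvd_sum dvd_mult int_binom_shift_prime_power_cong[OF p]) (use assms(2) in auto)
qed

lemma dvd_diff_shift_multiple:
  fixes P :: "int \<Rightarrow> int"
  assumes "\<And>t. m dvd P (t + T) - P t"
  shows "m dvd P (t + T * int L) - P t"
proof (induct L)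
  case (Suc L)
  have "P (t + T * int (Suc L)) - P t = (P ((t + T * int L) + T) - P (t + T * int L)) + (P (t + T * int L) - P t)"
    by (simp add: algebra_simps)
  also have "m dvd \<dots>"
    by (rule dvd_add[OF assms Suc])
  finally show ?case .
qed simp

lemma periodic_multiple:
  fixes h :: "int \<Rightarrow> 'a"
  assumes "\<And>t. h (t + a) = h t"
  shows "h (t + a * s) = h t"
proof (induct s arbitrary: t rule: int_induct[where k = 0])
  case (step1 i)
  have "h (t + a * (i + 1)) = h ((t + a * i) + a)"
    by (simp add: algebra_simps)
  with assms step1 show ?case
    by simp
next
  case (step2 i)
  have "h (t + a * (i - 1)) = h ((t + a * (i - 1)) + a)"
    by (rule assms[symmetric])
  also have "(t + a * (i - 1)) + a = t + a * i"
    by (simp add: algebra_simps)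
  finally show ?case
    using step2 by simp
qed simp

lemma periodic_coprime_imp_periodic_one:
  fixes h :: "int \<Rightarrow> 'a"
  assumes a: "\<And>t. h (t + a) = h t" and b: "\<And>t. h (t + b) = h t" and "coprime a b"
  shows "h (t + 1) = h t"
proof -
  obtain u w where "u * a + w * b = 1"
    using bezout_int[of a b] \<open>coprime a b\<close> by (metis coprime_iff_gcd_eq_1)
  then have "h (t + 1) = h ((t + a * u) + b * w)"
    by (simp add: add.assoc mult.commute)
  also have "\<dots> = h t"
    using periodic_multiple[of h b, OF b] periodic_multiple[of h a, OF a] by simp
  finally show ?thesis .
qed

lemma periodic_cong_newton_polynomial_nat:
  fixes p :: nat and g :: "int \<Rightarrow> int"
  assumes p: "prime p" and per: "\<And>t. g (t + int (p ^ e)) = g t" and "M * p ^ e \<le> K"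
  shows "int p ^ M dvd (\<Sum>k<K. (fwd_diff ^^ k) g 0 * int_binom (int n) k) - g (int n)"
proof -
  define U where "U = n + K"
  define a where "a = (\<lambda>i. int (n choose i) * (fwd_diff ^^ i) g 0)"
  have "g (int n) = (\<Sum>i\<le>U. a i)"
    using newton_forward_expansion[of g 0 n] by (simp add: U_def a_def sum.mono_neutral_left)
  moreover have "(\<Sum>k<K. (fwd_diff ^^ k) g 0 * int_binom (int n) k) = (\<Sum>i\<le>U. if i < K then a i else 0)"
    by (simp add: a_def int_binom_of_nat mult.commute sum.If_cases U_def) (rule sum.cong, auto)
  ultimately have "(\<Sum>k<K. (fwd_diff ^^ k) g 0 * int_binom (int n) k) - g (int n)
      = (\<Sum>i\<le>U. (if i < K then a i else 0) - a i)"
    by (simp add: sum_subtractf)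
  also have "int p ^ M dvd \<dots>"
  proof (rule dvd_sum)
    fix i
    show "int p ^ M dvd (if i < K then a i else 0) - a i"
      using fwd_diff_funpow_prime_power_dvd[of p g e M i 0, OF p per] assms(3) by (simp add: a_def)
  qed
  finally show ?thesis .
qed

text \<open>On \<open>t \<ge> 0\<close> the omitted terms of the Newton series are divisible by \<open>p\<^sup>M\<close> by nilpotence; both
  sides are periodic modulo \<open>p\<^sup>M\<close> with period a power of \<open>p\<close>, which reaches every negative \<open>t\<close>.\<close>
lemma periodic_cong_newton_polynomial:
  fixes p :: nat and g :: "int \<Rightarrow> int"
  assumes p: "prime p" and per: "\<And>t. g (t + int (p ^ e)) = g t" and K: "M * p ^ e \<le> K"
  shows "int p ^ M dvd (\<Sum>k<K. (fwd_diff ^^ k) g 0 * int_binom t k) - g t"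
proof -
  define P where "P = (\<lambda>t. \<Sum>k<K. (fwd_diff ^^ k) g 0 * int_binom t k)"
  define N where "N = M + K + e"
  define L where "L = nat (- t)"
  have "int (p ^ N) \<ge> 1"
    using p by (simp add: prime_gt_0_nat Suc_leI)
  then have "t + int (p ^ N) * int L \<ge> 0"
    using mult_right_mono[of 1 "int (p ^ N)" "int L"] by (auto simp: L_def)
  then obtain n where n: "t + int (p ^ N) * int L = int n"
    by (metis nonneg_int_cases)
  have P_periodic: "int p ^ M dvd P (t + int (p ^ N) * int L) - P t"
    unfolding P_def
    by (rule dvd_diff_shift_multiple, rule sum_int_binom_shift_prime_power_cong[OF p]) (simp add: N_def)
  have "g (t + int (p ^ N) * int L) = g t"
    using periodic_multiple[of g "int (p ^ e)", OF per, of t "int (p ^ (M + K)) * int L"]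
    by (simp add: N_def power_add ac_simps)
  then have "P t - g t = (P (int n) - g (int n)) - (P (t + int (p ^ N) * int L) - P t)"
    using n by simp
  also have "int p ^ M dvd \<dots>"
    unfolding P_def
    by (rule dvd_diff[OF periodic_cong_newton_polynomial_nat[of p g e M K n, OF p per K] P_periodic[unfolded P_def]])
  finally show ?thesis
    by (simp add: P_def)
qed

section \<open>Interpolation by periodic polyfracts\<close>

lemma dvd_prod_diff:
  fixes f g :: "'a \<Rightarrow> int"
  shows "(\<And>j. j \<in> A \<Longrightarrow> m dvd f j - g j) \<Longrightarrow> m dvd prod f A - prod g A"
proof (induct A rule: infinite_finite_induct)
  case (insert a A)
  have "prod f (insert a A) - prod g (insert a A) = f a * (prod f A - prod g A) + (f a - g a) * prod g A"
    using insert by (simp add: algebra_simps)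
  also have "m dvd \<dots>"
    using insert by (intro dvd_add dvd_mult dvd_mult2) simp_all
  finally show ?case .
qed simp_all

definition box :: "nat \<Rightarrow> nat \<Rightarrow> nat list set" where
  "box n K = {d. length d = n \<and> (\<forall>j<n. d!j < K)}"

lemma finite_box: "finite (box n K)"
proof (rule finite_subset)
  show "box n K \<subseteq> {d. set d \<subseteq> {..<K} \<and> length d = n}"
    by (auto simp: box_def in_set_conv_nth)
qed (rule finite_lists_length_eq, simp)

lemma box_Suc: "box (Suc n) K = (\<lambda>(k, d). k # d) ` ({..<K} \<times> box n K)"
proof (intro set_eqI iffI)
  fix d
  assume d: "d \<in> box (Suc n) K"
  then obtain k d' where "d = k # d'"
    by (cases d) (auto simp: box_def)
  with d show "d \<in> (\<lambda>(k, d). k # d) ` ({..<K} \<times> box n K)"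
    by (force simp: box_def)
qed (auto simp: box_def nth_Cons split: nat.splits)

lemma sum_box_prod:
  fixes w :: "nat \<Rightarrow> nat \<Rightarrow> int"
  shows "(\<Sum>d\<in>box n K. \<Prod>j<n. w j (d!j)) = (\<Prod>j<n. \<Sum>k<K. w j k)"
proof (induct n arbitrary: w)
  case 0
  have "box 0 K = {[]}"
    by (auto simp: box_def)
  then show ?case
    by simp
next
  case (Suc n)
  have inj: "inj_on (\<lambda>(k, d). k # d) ({..<K} \<times> box n K)"
    by (auto simp: inj_on_def)
  have "(\<Sum>d\<in>box (Suc n) K. \<Prod>j<Suc n. w j (d!j))
      = (\<Sum>kd\<in>{..<K} \<times> box n K. (\<lambda>d. \<Prod>j<Suc n. w j (d!j)) (fst kd # snd kd))"
    unfolding box_Suc by (subst sum.reindex[OF inj]) (simp add: case_prod_beta)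
  also have "\<dots> = (\<Sum>kd\<in>{..<K} \<times> box n K. w 0 (fst kd) * (\<Prod>j<n. w (Suc j) (snd kd ! j)))"
    by (simp add: prod.lessThan_Suc_shift del: prod.lessThan_Suc)
  also have "\<dots> = (\<Sum>k<K. w 0 k) * (\<Sum>d\<in>box n K. \<Prod>j<n. w (Suc j) (d!j))"
    by (simp add: sum_product sum.cartesian_product case_prod_beta)
  also have "\<dots> = (\<Prod>j<Suc n. \<Sum>k<K. w j k)"
    using Suc[of "\<lambda>j. w (Suc j)"] by (simp add: prod.lessThan_Suc_shift del: prod.lessThan_Suc)
  finally show ?case .
qed

definition residue_indicator :: "nat \<Rightarrow> int \<Rightarrow> int \<Rightarrow> int" where
  "residue_indicator q a t = (if t mod int q = a mod int q then 1 else 0)"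

definition same_residues :: "nat list \<Rightarrow> int list \<Rightarrow> int list \<Rightarrow> bool" where
  "same_residues qs x a \<longleftrightarrow> (\<forall>j<length qs. x!j mod int (qs!j) = a!j mod int (qs!j))"

lemma prod_residue_indicator:
  "(\<Prod>j<length qs. residue_indicator (qs!j) (a!j) (x!j)) = (if same_residues qs x a then 1 else 0)"
proof (cases "same_residues qs x a")
  case False
  then obtain j where "j < length qs" and "x!j mod int (qs!j) \<noteq> a!j mod int (qs!j)"
    by (auto simp: same_residues_def)
  with False show ?thesis
    by (simp add: residue_indicator_def prod_zero_iff) blast
qed (simp add: same_residues_def residue_indicator_def)

lemma same_residues_add_period:
  assumes "j < length qs" and "length x = length qs"
  shows "same_residues qs (x[j := x!j + int (qs!j)]) a \<longleftrightarrow> same_residues qs x a"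
  using assms by (auto simp: same_residues_def nth_list_update)

lemma same_residues_Arep_iff:
  assumes "x \<in> Arep qs" and "a \<in> Arep qs"
  shows "same_residues qs x a \<longleftrightarrow> x = a"
  using assms by (auto simp: same_residues_def Arep_def intro: nth_equalityI)

text \<open>The product over the variables of the Newton polynomials of \<open>periodic_cong_newton_polynomial\<close>
  for the residue indicators, times \<open>b\<close>.\<close>
lemma polyfract_point_indicator:
  fixes p :: nat and b :: "'b::ab_group_add"
  assumes p: "prime p" and qs: "\<forall>q\<in>set qs. \<exists>e. q = p ^ e" and b: "intmul (int (p ^ M)) b = 0"
  shows "\<exists>D. polyfract (length qs) D \<and>
    (\<forall>x. length x = length qs \<longrightarrow> peval D x = (if same_residues qs x a then b else 0))"
proof -
  define n where "n = length qs"
  define K where "K = M * sum_list qs"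
  define c where "c = (\<lambda>j k. (fwd_diff ^^ k) (residue_indicator (qs!j) (a!j)) 0)"
  define \<phi> where "\<phi> = (\<lambda>j t. \<Sum>k<K. c j k * int_binom t k)"
  have \<phi>: "int p ^ M dvd \<phi> j t - residue_indicator (qs!j) (a!j) t" if "j < n" for j t
  proof -
    obtain e where e: "qs!j = p ^ e"
      using qs nth_mem[of j qs] \<open>j < n\<close> unfolding n_def by blast
    have "M * p ^ e \<le> K"
      using member_le_sum_list[OF nth_mem, of j qs] \<open>j < n\<close> by (simp add: K_def n_def e)
    then show ?thesis
      using periodic_cong_newton_polynomial[OF p, of "residue_indicator (qs!j) (a!j)" e M K t]
      by (simp add: \<phi>_def c_def e residue_indicator_def)
  qed
  define D where "D = (\<lambda>d. if d \<in> box n K then intmul (\<Prod>j<n. c j (d!j)) b else 0)"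
  have supp_D: "{d. D d \<noteq> 0} \<subseteq> box n K"
    by (auto simp: D_def split: if_splits)
  have "polyfract n D"
    unfolding polyfract_def using finite_subset[OF supp_D finite_box] supp_D by (auto simp: box_def)
  moreover have "peval D x = (if same_residues qs x a then b else 0)" if "length x = n" for x
  proof -
    have "peval D x = (\<Sum>d\<in>box n K. intmul (monofract x d) (D d))"
      by (rule peval_eq_sum_superset[OF finite_box supp_D])
    also have "\<dots> = intmul (\<Sum>d\<in>box n K. \<Prod>j<n. int_binom (x!j) (d!j) * c j (d!j)) b"
      by (simp add: D_def monofract_def \<open>length x = n\<close> intmul_mult[symmetric] prod.distrib intmul_sum_left)
    also have "\<dots> = intmul (\<Prod>j<n. \<phi> j (x!j)) b"
      using sum_box_prod[of "\<lambda>j k. int_binom (x!j) k * c j k" n K] by (simp add: \<phi>_def mult.commute)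
    also have "\<dots> = intmul (\<Prod>j<n. residue_indicator (qs!j) (a!j) (x!j)) b"
      by (rule intmul_cong_dvd[OF b]) (simp, rule dvd_prod_diff, simp add: \<phi>)
    finally show ?thesis
      by (simp add: prod_residue_indicator n_def)
  qed
  ultimately show ?thesis
    unfolding n_def by blast
qed

lemma finite_Arep: "finite (Arep qs)"
proof (rule finite_subset)
  show "Arep qs \<subseteq> {xs. set xs \<subseteq> {0..<int (sum_list qs)} \<and> length xs = length qs}"
  proof (safe)
    fix x v
    assume "x \<in> Arep qs" and "v \<in> set x"
    then obtain j where "j < length qs" and "v = x!j"
      by (auto simp: Arep_def in_set_conv_nth)
    with \<open>x \<in> Arep qs\<close> member_le_sum_list[of "qs!j" qs]
    show "v \<in> {0..<int (sum_list qs)}"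
      by (fastforce simp: Arep_def)
  qed (simp add: Arep_def)
qed (rule finite_lists_length_eq, simp)

text \<open>Sum of the point indicators of \<open>polyfract_point_indicator\<close> over \<open>Arep qs\<close>.\<close>
lemma periodic_pf_interpolates:
  fixes p :: nat and f :: "int list \<Rightarrow> 'b::ab_group_add"
  assumes p: "prime p" and qs: "\<forall>q\<in>set qs. \<exists>e. q = p ^ e" and f: "\<forall>a\<in>Arep qs. f a \<in> prim p"
  shows "\<exists>D. periodic_pf qs D \<and> (\<forall>a\<in>Arep qs. peval D a = f a)"
proof -
  have "\<forall>a\<in>Arep qs. \<exists>D. polyfract (length qs) D \<and>
      (\<forall>x. length x = length qs \<longrightarrow> peval D x = (if same_residues qs x a then f a else 0))"
  proof
    fix a
    assume "a \<in> Arep qs"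
    then obtain k where "intmul (int (p ^ k)) (f a) = 0"
      using f unfolding prim_def by blast
    then show "\<exists>D. polyfract (length qs) D \<and>
        (\<forall>x. length x = length qs \<longrightarrow> peval D x = (if same_residues qs x a then f a else 0))"
      by (rule polyfract_point_indicator[OF p qs])
  qed
  then obtain Df where Df: "\<And>a. a \<in> Arep qs \<Longrightarrow> polyfract (length qs) (Df a) \<and>
      (\<forall>x. length x = length qs \<longrightarrow> peval (Df a) x = (if same_residues qs x a then f a else 0))"
    by metis
  define D where "D = (\<lambda>d. \<Sum>a\<in>Arep qs. Df a d)"
  have "polyfract (length qs) D"
    unfolding D_def using finite_Arep by (rule polyfract_sum) (use Df in blast)
  have peval_D: "peval D x = (\<Sum>a\<in>Arep qs. if same_residues qs x a then f a else 0)"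
    if "length x = length qs" for x
  proof -
    have "peval D x = (\<Sum>a\<in>Arep qs. peval (Df a) x)"
      unfolding D_def using Df finite_Arep by (intro peval_sum) (auto simp: polyfract_def)
    with Df that show ?thesis
      by simp
  qed
  have "peval D (x[j := x!j + int (qs!j)]) = peval D x" if "length x = length qs" and "j < length qs" for x j
    using that by (simp add: peval_D same_residues_add_period)
  moreover have "peval D a = f a" if "a \<in> Arep qs" for a
  proof -
    have "length a = length qs"
      using that by (simp add: Arep_def)
    then have "peval D a = (\<Sum>a'\<in>Arep qs. if a = a' then f a' else 0)"
      using same_residues_Arep_iff[OF that] by (simp add: peval_D cong: sum.cong)
    with that show ?thesis
      by (simp add: finite_Arep)
  qed
  ultimately show ?thesis
    using \<open>polyfract (length qs) D\<close> by (auto simp: periodic_pf_def)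
qed

section \<open>Primary components of a finite commutative group\<close>

definition ppart :: "nat \<Rightarrow> nat \<Rightarrow> nat" where
  "ppart N p = p ^ multiplicity p N"

lemma ppart_decomp:
  assumes p: "prime p" and "N > 0"
  shows "N = ppart N p * (N div ppart N p)" and "\<not> p dvd N div ppart N p"
    and "coprime (ppart N p) (N div ppart N p)"
proof -
  show "N = ppart N p * (N div ppart N p)"
    by (simp add: ppart_def multiplicity_dvd)
  have "\<not> is_unit p"
    using p not_prime_unit by blast
  then show *: "\<not> p dvd N div ppart N p"
    using multiplicity_decompose[of N p] \<open>N > 0\<close> by (simp add: ppart_def)
  show "coprime (ppart N p) (N div ppart N p)"
    using prime_imp_coprime[OF p *] by (simp add: ppart_def)
qed

text \<open>The coefficient \<open>E\<close> with \<open>E \<equiv> 1 (mod p-part of N)\<close> and \<open>E \<equiv> 0 (mod the cofactor)\<close>: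
  multiplication by \<open>E\<close> is the projection of a group of order \<open>N\<close> onto its \<open>p\<close>-primary component.\<close>
definition idem_coeff :: "nat \<Rightarrow> nat \<Rightarrow> int" where
  "idem_coeff N p = (SOME E. int (ppart N p) dvd E - 1 \<and> int (N div ppart N p) dvd E)"

lemma idem_coeff:
  assumes "prime p" and "N > 0"
  shows "int (ppart N p) dvd idem_coeff N p - 1" and "int (N div ppart N p) dvd idem_coeff N p"
proof -
  have "coprime (int (ppart N p)) (int (N div ppart N p))"
    using ppart_decomp[OF assms] by simp
  then obtain u w where "u * int (ppart N p) + w * int (N div ppart N p) = 1"
    using bezout_int[of "int (ppart N p)"] by (metis coprime_iff_gcd_eq_1)
  then have "int (ppart N p) dvd w * int (N div ppart N p) - 1"
    by (metis add_diff_cancel_right' diff_add_cancel dvd_minus_iff dvd_triv_right minus_diff_eq)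
  then have "\<exists>E. int (ppart N p) dvd E - 1 \<and> int (N div ppart N p) dvd E"
    by (intro exI[of _ "w * int (N div ppart N p)"]) simp
  then have "int (ppart N p) dvd idem_coeff N p - 1 \<and> int (N div ppart N p) dvd idem_coeff N p"
    unfolding idem_coeff_def by (rule someI_ex)
  then show "int (ppart N p) dvd idem_coeff N p - 1" and "int (N div ppart N p) dvd idem_coeff N p"
    by simp_all
qed

lemma prim_iff_intmul_ppart:
  fixes b :: "'b::{ab_group_add, finite}"
  assumes p: "prime p"
  shows "b \<in> prim p \<longleftrightarrow> intmul (int (ppart (card (UNIV :: 'b set)) p)) b = 0"
proof
  assume "b \<in> prim p"
  then obtain k where k: "intmul (int (p ^ k)) b = 0"
    by (auto simp: prim_def)
  define N where "N = card (UNIV :: 'b set)"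
  have "N > 0"
    by (simp add: N_def card_gt_0_iff)
  define y where "y = N div ppart N p"
  have "coprime (int (p ^ k)) (int y)"
    using prime_imp_coprime[OF p ppart_decomp(2)[OF p \<open>N > 0\<close>]] by (simp add: y_def)
  then obtain u w where uw: "u * int (p ^ k) + w * int y = 1"
    using bezout_int[of "int (p ^ k)" "int y"] by (metis coprime_iff_gcd_eq_1)
  have "int (ppart N p) = (u * int (ppart N p)) * int (p ^ k) + w * int N"
    using arg_cong[OF ppart_decomp(1)[OF p \<open>N > 0\<close>], of int] uw
    by (simp add: y_def algebra_simps) (metis distrib_left mult.commute mult.left_commute mult_1_right)
  then have "intmul (int (ppart N p)) b = intmul ((u * int (ppart N p)) * int (p ^ k) + w * int N) b"
    by (rule arg_cong)
  also have "\<dots> = intmul (u * int (ppart N p)) (intmul (int (p ^ k)) b) + intmul w (intmul (int N) b)"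
    by (simp only: intmul_add_left intmul_mult)
  also have "\<dots> = 0"
    using k by (simp add: intmul_card_UNIV N_def)
  finally show "intmul (int (ppart (card (UNIV :: 'b set)) p)) b = 0"
    by (simp add: N_def)
qed (auto simp: prim_def ppart_def)

lemma zero_in_prim: "0 \<in> prim p"
  by (auto simp: prim_def intro: exI[of _ 0])

lemma intmul_in_prim:
  fixes a :: "'b::{ab_group_add, finite}"
  shows "prime p \<Longrightarrow> a \<in> prim p \<Longrightarrow> intmul m a \<in> prim p"
  by (simp add: prim_iff_intmul_ppart intmul_mult[symmetric] mult.commute) (simp add: intmul_mult)

lemma sum_in_prim:
  fixes f :: "_ \<Rightarrow> 'b::{ab_group_add, finite}"
  assumes "prime p" and "\<And>i. i \<in> A \<Longrightarrow> f i \<in> prim p"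
  shows "(\<Sum>i\<in>A. f i) \<in> prim p"
  using assms(2)
proof (induct A rule: infinite_finite_induct)
  case (insert x F)
  then show ?case
    using assms(1) by (simp add: prim_iff_intmul_ppart intmul_add_right)
qed (simp_all add: zero_in_prim)

lemma peval_in_prim:
  fixes C :: "nat list \<Rightarrow> 'b::{ab_group_add, finite}"
  assumes "prime p" and "\<And>d. C d \<in> prim p"
  shows "peval C x \<in> prim p"
  unfolding peval_monofract using assms by (intro sum_in_prim intmul_in_prim)

definition prime_cover :: "nat list \<Rightarrow> nat \<Rightarrow> bool" where
  "prime_cover ps N \<longleftrightarrow> distinct ps \<and> (\<forall>p\<in>set ps. prime p) \<and> (\<forall>p. prime p \<and> p dvd N \<longrightarrow> p \<in> set ps)"

lemma ppart_dvd_cofactor: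
  assumes ps: "prime_cover ps N" and "N > 0" and "i < length ps" and "j < length ps" and "i \<noteq> j"
  shows "ppart N (ps!j) dvd N div ppart N (ps!i)"
proof -
  have pi: "prime (ps!i)" and pj: "prime (ps!j)" and "ps!i \<noteq> ps!j"
    using assms by (auto simp: prime_cover_def nth_eq_iff_index_eq)
  then have "coprime (ppart N (ps!j)) (ppart N (ps!i))"
    using primes_coprime[OF pj pi] by (simp add: ppart_def)
  moreover have "ppart N (ps!j) dvd (N div ppart N (ps!i)) * ppart N (ps!i)"
    using ppart_decomp(1)[OF pi \<open>N > 0\<close>] by (simp add: ppart_def multiplicity_dvd mult.commute)
  ultimately show ?thesis
    using coprime_dvd_mult_left_iff by blast
qed

lemma intmul_idem_coeff_other_prim:
  fixes c :: "'b::{ab_group_add, finite}"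
  assumes ps: "prime_cover ps (card (UNIV :: 'b set))"
    and "i < length ps" and "j < length ps" and "i \<noteq> j" and "c \<in> prim (ps!j)"
  shows "intmul (idem_coeff (card (UNIV :: 'b set)) (ps!i)) c = 0"
proof -
  define N where "N = card (UNIV :: 'b set)"
  have "N > 0"
    by (simp add: N_def card_gt_0_iff)
  have "int (ppart N (ps!j)) dvd int (N div ppart N (ps!i))"
    using ppart_dvd_cofactor[OF ps[folded N_def] \<open>N > 0\<close>] assms(2-4) by simp
  also have "\<dots> dvd idem_coeff N (ps!i)"
    using idem_coeff(2) ps assms(2) \<open>N > 0\<close> by (simp add: prime_cover_def)
  finally obtain r where "idem_coeff N (ps!i) = r * int (ppart N (ps!j))"
    by (metis dvdE mult.commute)
  moreover have "intmul (int (ppart N (ps!j))) c = 0"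
    using assms(5) prim_iff_intmul_ppart[of "ps!j" c] ps assms(3) by (simp add: prime_cover_def N_def)
  ultimately show ?thesis
    by (simp add: intmul_mult N_def)
qed

lemma intmul_idem_coeff_prim:
  fixes c :: "'b::{ab_group_add, finite}"
  assumes "prime p" and "c \<in> prim p"
  shows "intmul (idem_coeff (card (UNIV :: 'b set)) p) c = c"
  using intmul_cong_dvd[of "int (ppart (card (UNIV :: 'b set)) p)" c _ 1] assms
    idem_coeff(1)[OF assms(1), of "card (UNIV :: 'b set)"]
  by (simp add: prim_iff_intmul_ppart card_gt_0_iff)

lemma intmul_idem_coeff_in_prim:
  fixes b :: "'b::{ab_group_add, finite}"
  assumes p: "prime p"
  shows "intmul (idem_coeff (card (UNIV :: 'b set)) p) b \<in> prim p"
proof -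
  define N where "N = card (UNIV :: 'b set)"
  have "N > 0"
    by (simp add: N_def card_gt_0_iff)
  obtain r where r: "idem_coeff N p = int (N div ppart N p) * r"
    using idem_coeff(2)[OF p \<open>N > 0\<close>] by (rule dvdE)
  have "int (ppart N p) * idem_coeff N p = r * int N"
    using arg_cong[OF ppart_decomp(1)[OF p \<open>N > 0\<close>], of int] by (simp add: r algebra_simps)
  then have "intmul (int (ppart N p)) (intmul (idem_coeff N p) b) = 0"
    by (simp add: intmul_mult[symmetric] intmul_mult[of r] intmul_card_UNIV N_def)
  then show ?thesis
    using prim_iff_intmul_ppart[OF p, of "intmul (idem_coeff N p) b"] by (simp add: N_def)
qed

lemma int_dvd_if_ppart_dvd:
  assumes ps: "prime_cover ps N" and "N > 0" and "\<And>i. i < length ps \<Longrightarrow> int (ppart N (ps!i)) dvd X"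
  shows "int N dvd X"
proof (cases "X = 0")
  case False
  have "N dvd nat \<bar>X\<bar>"
  proof (rule multiplicity_le_imp_dvd)
    fix r :: nat
    assume "prime r"
    show "multiplicity r N \<le> multiplicity r (nat \<bar>X\<bar>)"
    proof (cases "r \<in> set ps")
      case True
      then obtain i where "i < length ps" and "ps!i = r"
        by (auto simp: in_set_conv_nth)
      with assms(3) have "ppart N r dvd nat \<bar>X\<bar>"
        by fastforce
      moreover have "\<not> is_unit r"
        using \<open>prime r\<close> not_prime_unit by blast
      ultimately show ?thesis
        using power_dvd_iff_le_multiplicity[of "nat \<bar>X\<bar>" r] False by (simp add: ppart_def)
    next
      case False
      with ps \<open>prime r\<close> have "\<not> r dvd N"
        by (auto simp: prime_cover_def)
      then show ?thesis
        by (simp add: not_dvd_imp_multiplicity_0)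
    qed
  qed (use \<open>N > 0\<close> in simp)
  then show ?thesis
    by simp
qed simp

text \<open>The idempotents sum to \<open>1\<close> modulo \<open>N\<close>, since their sum is \<open>\<equiv> 1\<close> modulo every prime-power part.\<close>
lemma sum_intmul_idem_coeff:
  fixes b :: "'b::{ab_group_add, finite}"
  assumes ps: "prime_cover ps (card (UNIV :: 'b set))"
  shows "(\<Sum>i<length ps. intmul (idem_coeff (card (UNIV :: 'b set)) (ps!i)) b) = b"
proof -
  define N where "N = card (UNIV :: 'b set)"
  have "N > 0"
    by (simp add: N_def card_gt_0_iff)
  have prime: "prime (ps!i)" if "i < length ps" for i
    using ps that by (simp add: prime_cover_def)
  define X where "X = (\<Sum>i<length ps. idem_coeff N (ps!i)) - 1"
  have "int (ppart N (ps!i)) dvd X" if "i < length ps" for i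
  proof -
    have "X = (idem_coeff N (ps!i) - 1) + (\<Sum>j\<in>{..<length ps} - {i}. idem_coeff N (ps!j))"
      unfolding X_def using that by (simp add: sum.remove)
    also have "int (ppart N (ps!i)) dvd \<dots>"
    proof (intro dvd_add dvd_sum)
      show "int (ppart N (ps!i)) dvd idem_coeff N (ps!i) - 1"
        by (rule idem_coeff(1)[OF prime[OF that] \<open>N > 0\<close>])
      fix j
      assume j: "j \<in> {..<length ps} - {i}"
      have "int (ppart N (ps!i)) dvd int (N div ppart N (ps!j))"
        using ppart_dvd_cofactor[OF ps[folded N_def] \<open>N > 0\<close>, of j i] j that by simp
      also have "\<dots> dvd idem_coeff N (ps!j)"
        using j by (intro idem_coeff(2) prime \<open>N > 0\<close>) simp
      finally show "int (ppart N (ps!i)) dvd idem_coeff N (ps!j)" .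
    qed
    finally show ?thesis .
  qed
  then have "int N dvd X"
    by (rule int_dvd_if_ppart_dvd[OF ps[folded N_def] \<open>N > 0\<close>])
  then have "intmul (\<Sum>i<length ps. idem_coeff N (ps!i)) b = intmul 1 b"
    by (intro intmul_cong_dvd[of "int N"]) (simp_all add: X_def intmul_card_UNIV N_def)
  then show ?thesis
    by (simp add: N_def intmul_sum_left)
qed

lemma pproj_eq_intmul_idem_coeff:
  fixes b :: "'b::{ab_group_add, finite}"
  assumes ps: "prime_cover ps (card (UNIV :: 'b set))" and "i < length ps"
  shows "pproj ps i b = intmul (idem_coeff (card (UNIV :: 'b set)) (ps!i)) b"
  unfolding pproj_def
proof (rule the_equality)
  define E where "E = (\<lambda>j. idem_coeff (card (UNIV :: 'b set)) (ps!j))"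
  have prime: "prime (ps!j)" if "j < length ps" for j
    using ps that by (simp add: prime_cover_def)
  show "\<exists>cs. length cs = length ps \<and> (\<forall>j<length ps. cs!j \<in> prim (ps!j)) \<and> sum_list cs = b
      \<and> intmul (E i) b = cs!i"
  proof (intro exI conjI allI impI)
    show "sum_list (map (\<lambda>j. intmul (E j) b) [0..<length ps]) = b"
      using sum_intmul_idem_coeff[OF ps, of b] by (simp add: sum_list_sum_nth atLeast0LessThan E_def)
    fix j
    assume "j < length ps"
    then show "map (\<lambda>j. intmul (E j) b) [0..<length ps] ! j \<in> prim (ps!j)"
      using intmul_idem_coeff_in_prim[OF prime, of j b] by (simp add: E_def)
  qed (use \<open>i < length ps\<close> in simp_all)
  fix c
  assume "\<exists>cs. length cs = length ps \<and> (\<forall>j<length ps. cs!j \<in> prim (ps!j)) \<and> sum_list cs = b \<and> c = cs!i"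
  then obtain cs where cs: "length cs = length ps" "\<forall>j<length ps. cs!j \<in> prim (ps!j)" "sum_list cs = b"
    and "c = cs!i"
    by blast
  have "intmul (E i) b = (\<Sum>j<length ps. intmul (E i) (cs!j))"
    using cs(1,3) by (simp add: sum_list_sum_nth atLeast0LessThan intmul_sum_right[symmetric])
  also have "\<dots> = (\<Sum>j\<in>{i}. intmul (E i) (cs!j))"
    by (rule sum.mono_neutral_right)
      (use \<open>i < length ps\<close> intmul_idem_coeff_other_prim[OF ps \<open>i < length ps\<close>] cs(2) in \<open>auto simp: E_def\<close>)
  also have "\<dots> = c"
    using intmul_idem_coeff_prim[OF prime, of i "cs!i"] cs(2) \<open>i < length ps\<close> \<open>c = cs!i\<close> by (simp add: E_def)
  finally show "c = intmul (E i) b" ..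
qed

section \<open>Blocks of variables\<close>

lemma off_0 [simp]: "off Q 0 = 0"
  by (simp add: off_def)

lemma off_Cons_Suc [simp]: "off (a # Q) (Suc k) = length a + off Q k"
  by (simp add: off_def)

lemma off_Suc: "i < length Q \<Longrightarrow> off Q (Suc i) = off Q i + length (Q!i)"
  by (simp add: off_def take_Suc_conv_app_nth)

lemma concat_split_block:
  assumes "i < length Q"
  shows "concat Q = concat (take i Q) @ Q!i @ concat (drop (Suc i) Q)"
    and "length (concat (take i Q)) = off Q i"
proof -
  have "concat Q = concat (take i Q) @ concat (drop i Q)"
    by (metis append_take_drop_id concat_append)
  also have "drop i Q = Q!i # drop (Suc i) Q"
    using assms by (simp add: Cons_nth_drop_Suc)
  finally show "concat Q = concat (take i Q) @ Q!i @ concat (drop (Suc i) Q)"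
    by simp
  show "length (concat (take i Q)) = off Q i"
    by (simp add: off_def length_concat)
qed

lemma off_add_length_le: "i < length Q \<Longrightarrow> off Q i + length (Q!i) \<le> length (concat Q)"
  using concat_split_block[of i Q] by (metis le_add1 length_append add.assoc)

lemma off_add_length_le_off: "i < k \<Longrightarrow> k \<le> length Q \<Longrightarrow> off Q i + length (Q!i) \<le> off Q k"
proof -
  assume "i < k" and "k \<le> length Q"
  then have "take k Q = take (Suc i) Q @ take (k - Suc i) (drop (Suc i) Q)"
    by (metis Suc_leI le_add_diff_inverse take_add)
  then have "off Q k = off Q (Suc i) + sum_list (map length (take (k - Suc i) (drop (Suc i) Q)))"
    by (simp add: off_def)
  with off_Suc[of i Q] \<open>i < k\<close> \<open>k \<le> length Q\<close> show ?thesis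
    by simp
qed

lemma blockvars_unique:
  assumes "i < length Q" and "k < length Q" and "j \<in> blockvars Q i" and "j \<in> blockvars Q k"
  shows "i = k"
  using off_add_length_le_off[of i k Q] off_add_length_le_off[of k i Q] assms
  by (cases i k rule: linorder_cases) (auto simp: blockvars_def)

lemma blockvars_exists: "j < length (concat Q) \<Longrightarrow> \<exists>k<length Q. j \<in> blockvars Q k"
proof (induct Q arbitrary: j)
  case (Cons a Q)
  show ?case
  proof (cases "j < length a")
    case False
    with Cons.prems have "j - length a < length (concat Q)"
      by simp
    then obtain k where "k < length Q" and "j - length a \<in> blockvars Q k"
      using Cons.hyps by blast
    with False show ?thesis
      by (intro exI[of _ "Suc k"]) (auto simp: blockvars_def)
  qed (auto simp: blockvars_def intro: exI[of _ 0])
qed simp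

lemma concat_nth_blockvars:
  assumes "i < length Q" and "j \<in> blockvars Q i"
  shows "concat Q ! j = Q!i!(j - off Q i)"
  using assms concat_split_block[OF assms(1)]
  by (auto simp: blockvars_def nth_append)

definition block_part :: "nat list list \<Rightarrow> nat \<Rightarrow> 'a list \<Rightarrow> 'a list" where
  "block_part Q i d = take (length (Q!i)) (drop (off Q i) d)"

definition pad_block :: "nat list list \<Rightarrow> nat \<Rightarrow> 'a::zero list \<Rightarrow> 'a list" where
  "pad_block Q i y = replicate (off Q i) 0 @ y @ replicate (length (concat Q) - off Q i - length (Q!i)) 0"

lemma blockx_eq_block_part [simp]: "blockx Q i x = block_part Q i x"
  by (simp add: blockx_def block_part_def)

lemma blockC_eq: "blockC Q i C d' = (if length d' = length (Q!i) then C (pad_block Q i d') else 0)"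
  by (simp add: blockC_def pad_block_def)

lemma length_block_part:
  "i < length Q \<Longrightarrow> length d = length (concat Q) \<Longrightarrow> length (block_part Q i d) = length (Q!i)"
  using off_add_length_le[of i Q] by (simp add: block_part_def)

lemma block_part_nth:
  "j < length (Q!i) \<Longrightarrow> off Q i \<le> length d \<Longrightarrow> block_part Q i d ! j = d ! (off Q i + j)"
  by (simp add: block_part_def)

lemma block_part_update_outside:
  assumes "j \<notin> blockvars Q i"
  shows "block_part Q i (x[j := v]) = block_part Q i x"
proof (cases "j < off Q i")
  case False
  with assms have "length (Q!i) \<le> j - off Q i"
    by (auto simp: blockvars_def)
  with False show ?thesis
    by (simp add: block_part_def drop_update_swap take_update_cancel)
qed (simp add: block_part_def drop_update_cancel)

lemma block_part_update_inside:
  "j \<in> blockvars Q i \<Longrightarrow> block_part Q i (x[j := v]) = (block_part Q i x)[j - off Q i := v]"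
  by (simp add: block_part_def blockvars_def drop_update_swap take_update_swap)

lemma length_pad_block:
  "i < length Q \<Longrightarrow> length y = length (Q!i) \<Longrightarrow> length (pad_block Q i y) = length (concat Q)"
  using off_add_length_le[of i Q] by (simp add: pad_block_def)

lemma block_part_pad_block: "length y = length (Q!i) \<Longrightarrow> block_part Q i (pad_block Q i y) = y"
  by (simp add: block_part_def pad_block_def)

lemma pad_block_nth:
  assumes "i < length Q" and "length y = length (Q!i)" and "j < length (concat Q)"
  shows "pad_block Q i y ! j = (if j \<in> blockvars Q i then y ! (j - off Q i) else 0)"
  using off_add_length_le[OF assms(1)] assms(2,3) by (auto simp: pad_block_def blockvars_def nth_append)

lemma pad_block_update:
  "j < length y \<Longrightarrow> pad_block Q i (y[j := v]) = (pad_block Q i y)[off Q i + j := v]"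
  by (simp add: pad_block_def list_update_append)

lemma pad_block_block_part:
  assumes "i < length Q" and "length d = length (concat Q)"
    and "\<forall>j<length d. j \<notin> blockvars Q i \<longrightarrow> d!j = (0::'a::zero)"
  shows "pad_block Q i (block_part Q i d) = d"
proof (rule nth_equalityI)
  have len: "length (block_part Q i d) = length (Q!i)"
    by (rule length_block_part[OF assms(1,2)])
  then show "length (pad_block Q i (block_part Q i d)) = length d"
    using length_pad_block[OF assms(1)] assms(2) by simp
  fix j
  assume "j < length (pad_block Q i (block_part Q i d))"
  then have "j < length (concat Q)"
    using length_pad_block[OF assms(1) len] by simp
  moreover have "off Q i \<le> length d"
    using off_add_length_le[OF assms(1)] assms(2) by simp
  ultimately show "pad_block Q i (block_part Q i d) ! j = d ! j"
    using pad_block_nth[OF assms(1) len] block_part_nth[of "j - off Q i" Q i d] assms(2,3)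
    by (auto simp: blockvars_def)
qed

lemma pad_block_outside:
  "i < length Q \<Longrightarrow> length y = length (Q!i) \<Longrightarrow>
    \<forall>j<length (pad_block Q i y). j \<notin> blockvars Q i \<longrightarrow> pad_block Q i y ! j = (0::'a::zero)"
  using pad_block_nth length_pad_block by fastforce

lemma block_part_Arep:
  assumes "i < length Q" and x: "x \<in> Arep (concat Q)"
  shows "block_part Q i x \<in> Arep (Q!i)"
  unfolding Arep_def
proof (intro CollectI conjI allI impI)
  have "length x = length (concat Q)"
    using x by (simp add: Arep_def)
  then show "length (block_part Q i x) = length (Q!i)"
    by (rule length_block_part[OF assms(1)])
  fix j
  assume "j < length (Q!i)"
  then have "off Q i + j \<in> blockvars Q i" and "off Q i + j < length x"
    using off_add_length_le[OF assms(1)] x by (auto simp: blockvars_def Arep_def)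
  then show "0 \<le> block_part Q i x ! j" and "block_part Q i x ! j < int (Q!i!j)"
    using x \<open>j < length (Q!i)\<close> concat_nth_blockvars[OF assms(1), of "off Q i + j"]
    by (auto simp: Arep_def block_part_nth)
qed

lemma monofract_block_part:
  assumes "i < length Q" and "length x = length (concat Q)" and "length d = length (concat Q)"
    and "\<forall>j<length d. j \<notin> blockvars Q i \<longrightarrow> d!j = 0"
  shows "monofract x d = monofract (block_part Q i x) (block_part Q i d)"
proof -
  define o' where "o' = off Q i"
  define L where "L = length (Q!i)"
  have bound: "o' + L \<le> length x"
    using off_add_length_le[OF assms(1)] assms(2) by (simp add: o'_def L_def)
  have "monofract x d = (\<Prod>j\<in>{o'..<o'+L}. int_binom (x!j) (d!j))"
    unfolding monofract_def
    using bound assms(2-4) by (intro prod.mono_neutral_right) (auto simp: blockvars_def o'_def L_def)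
  also have "\<dots> = (\<Prod>j<L. int_binom (x!(o'+j)) (d!(o'+j)))"
    by (rule prod.reindex_bij_witness[of _ "\<lambda>j. o' + j" "\<lambda>j. j - o'"]) auto
  also have "\<dots> = monofract (block_part Q i x) (block_part Q i d)"
    unfolding monofract_def using length_block_part[OF assms(1,2)] bound assms(2,3)
    by (intro prod.cong) (simp_all add: L_def o'_def block_part_nth)
  finally show ?thesis .
qed

lemma support_blockC:
  "{d'. blockC Q i C d' \<noteq> 0} = block_part Q i ` {d. C d \<noteq> 0 \<and> d = pad_block Q i (block_part Q i d)
      \<and> length (block_part Q i d) = length (Q!i)}"
  by (auto simp: blockC_eq block_part_pad_block intro!: image_eqI)

lemma polyfract_blockC:
  fixes C :: "nat list \<Rightarrow> 'b::ab_group_add"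
  assumes "polyfract (length (concat Q)) C"
  shows "polyfract (length (Q!i)) (blockC Q i C)"
  using assms unfolding polyfract_def support_blockC
  by (auto simp: blockC_eq intro: finite_subset[of _ "block_part Q i ` {d. C d \<noteq> 0}"])

lemma peval_blockC:
  fixes C :: "nat list \<Rightarrow> 'b::ab_group_add"
  assumes "i < length Q" and pf: "polyfract (length (concat Q)) C" and "only_block Q i C"
    and "length x = length (concat Q)"
  shows "peval (blockC Q i C) (block_part Q i x) = peval C x"
proof -
  define S where "S = {d. C d \<noteq> 0}"
  have "finite S" and len_S: "\<And>d. d \<in> S \<Longrightarrow> length d = length (concat Q)"
    using pf by (auto simp: polyfract_def S_def)
  have outside_S: "\<And>d. d \<in> S \<Longrightarrow> \<forall>j<length d. j \<notin> blockvars Q i \<longrightarrow> d!j = 0"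
    using assms(3) by (auto simp: only_block_def S_def)
  have pad_part: "\<And>d. d \<in> S \<Longrightarrow> pad_block Q i (block_part Q i d) = d"
    using pad_block_block_part[OF assms(1)] len_S outside_S by blast
  have inj: "inj_on (block_part Q i) S"
    by (rule inj_on_inverseI[where g = "pad_block Q i"]) (rule pad_part)
  have "peval (blockC Q i C) (block_part Q i x)
      = (\<Sum>d'\<in>block_part Q i ` S. intmul (monofract (block_part Q i x) d') (blockC Q i C d'))"
    using \<open>finite S\<close> by (intro peval_eq_sum_superset) (auto simp: support_blockC S_def)
  also have "\<dots> = (\<Sum>d\<in>S. intmul (monofract (block_part Q i x) (block_part Q i d)) (blockC Q i C (block_part Q i d)))"
    by (rule sum.reindex[OF inj, unfolded comp_def])
  also have "\<dots> = (\<Sum>d\<in>S. intmul (monofract x d) (C d))"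
  proof (rule sum.cong[OF refl])
    fix d
    assume "d \<in> S"
    then have "blockC Q i C (block_part Q i d) = C d"
      using length_block_part[OF assms(1) len_S] pad_part by (simp add: blockC_eq)
    moreover have "monofract x d = monofract (block_part Q i x) (block_part Q i d)"
      using monofract_block_part[OF assms(1,4)] len_S outside_S \<open>d \<in> S\<close> by blast
    ultimately show "intmul (monofract (block_part Q i x) (block_part Q i d)) (blockC Q i C (block_part Q i d))
        = intmul (monofract x d) (C d)"
      by simp
  qed
  also have "\<dots> = peval C x"
    by (simp add: peval_monofract S_def)
  finally show ?thesis .
qed

definition embed_block :: "nat list list \<Rightarrow> nat \<Rightarrow> (nat list \<Rightarrow> 'b::zero) \<Rightarrow> nat list \<Rightarrow> 'b" where
  "embed_block Q i D = (\<lambda>d. if length d = length (concat Q) \<and> (\<forall>j<length d. j \<notin> blockvars Q i \<longrightarrow> d!j = 0)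
      then D (block_part Q i d) else 0)"

lemma embed_block:
  fixes D :: "nat list \<Rightarrow> 'b::ab_group_add"
  assumes "i < length Q" and pf: "polyfract (length (Q!i)) D"
  shows "polyfract (length (concat Q)) (embed_block Q i D)" and "only_block Q i (embed_block Q i D)"
    and "blockC Q i (embed_block Q i D) = D"
proof -
  have "{d. embed_block Q i D d \<noteq> 0} \<subseteq> pad_block Q i ` {d. D d \<noteq> 0}"
  proof
    fix d
    assume "d \<in> {d. embed_block Q i D d \<noteq> 0}"
    then have "length d = length (concat Q)" and "\<forall>j<length d. j \<notin> blockvars Q i \<longrightarrow> d!j = 0"
      and "D (block_part Q i d) \<noteq> 0"
      by (auto simp: embed_block_def split: if_splits)
    then show "d \<in> pad_block Q i ` {d. D d \<noteq> 0}"
      using pad_block_block_part[OF assms(1), of d] by (intro image_eqI[of _ _ "block_part Q i d"]) simp_all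
  qed
  then have "finite {d. embed_block Q i D d \<noteq> 0}"
    using pf by (auto simp: polyfract_def elim: finite_subset)
  then show "polyfract (length (concat Q)) (embed_block Q i D)"
    by (simp add: polyfract_def embed_block_def)
  show "only_block Q i (embed_block Q i D)"
    by (simp add: only_block_def embed_block_def)
  show "blockC Q i (embed_block Q i D) = D"
  proof
    fix d'
    show "blockC Q i (embed_block Q i D) d' = D d'"
    proof (cases "length d' = length (Q!i)")
      case True
      then show ?thesis
        using length_pad_block[OF assms(1) True] pad_block_outside[OF assms(1) True] block_part_pad_block[OF True]
        by (simp add: blockC_eq embed_block_def)
    next
      case False
      with pf show ?thesis
        by (auto simp: blockC_eq polyfract_def)
    qed
  qed
qed

lemma peval_embed_block:
  fixes D :: "nat list \<Rightarrow> 'b::ab_group_add"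
  assumes "i < length Q" and "polyfract (length (Q!i)) D" and "length x = length (concat Q)"
  shows "peval (embed_block Q i D) x = peval D (block_part Q i x)"
  using peval_blockC[OF assms(1) embed_block(1,2)[OF assms(1,2)] assms(3)] embed_block(3)[OF assms(1,2)]
  by simp

lemma periodic_sum_blocks:
  fixes F :: "int list \<Rightarrow> 'b::ab_group_add" and h :: "nat \<Rightarrow> int list \<Rightarrow> 'b"
  assumes F: "\<And>x. length x = length (concat Q) \<Longrightarrow> F x = (\<Sum>i<length Q. h i (block_part Q i x))"
    and h: "\<And>i y j. i < length Q \<Longrightarrow> length y = length (Q!i) \<Longrightarrow> j < length (Q!i) \<Longrightarrow>
              h i (y[j := y!j + int (Q!i!j)]) = h i y"
    and "length x = length (concat Q)" and "j < length (concat Q)"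
  shows "F (x[j := x!j + int (concat Q ! j)]) = F x"
proof -
  obtain k where k: "k < length Q" "j \<in> blockvars Q k"
    using blockvars_exists[OF assms(4)] by blast
  define j' where "j' = j - off Q k"
  have "j' < length (Q!k)" and "off Q k + j' = j"
    using k(2) by (auto simp: blockvars_def j'_def)
  have "block_part Q k (x[j := x!j + int (concat Q ! j)])
      = (block_part Q k x)[j' := block_part Q k x ! j' + int (Q!k!j')]"
    using block_part_update_inside[OF k(2)] block_part_nth[of j' Q k x] concat_nth_blockvars[OF k]
      off_add_length_le[OF k(1)] assms(3) \<open>j' < length (Q!k)\<close> \<open>off Q k + j' = j\<close>
    by (simp add: j'_def)
  then have "h i (block_part Q i (x[j := x!j + int (concat Q ! j)])) = h i (block_part Q i x)"
    if "i < length Q" for i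
  proof (cases "i = k")
    case False
    with that k blockvars_unique[of i Q k j] have "j \<notin> blockvars Q i"
      by blast
    then show ?thesis
      by (simp add: block_part_update_outside)
  qed (simp add: h[OF k(1) length_block_part[OF k(1) assms(3)] \<open>j' < length (Q!k)\<close>])
  then show ?thesis
    using F assms(3) by simp
qed

lemma periodic_blockC:
  fixes C :: "nat list \<Rightarrow> 'b::ab_group_add"
  assumes "i < length Q" and "polyfract (length (concat Q)) C" and "only_block Q i C"
    and per: "\<And>x j. length x = length (concat Q) \<Longrightarrow> j < length (concat Q) \<Longrightarrow>
                peval C (x[j := x!j + int (concat Q ! j)]) = peval C x"
  shows "periodic_pf (Q!i) (blockC Q i C)"
  unfolding periodic_pf_def
proof (intro conjI allI impI)
  show "polyfract (length (Q!i)) (blockC Q i C)"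
    by (rule polyfract_blockC[OF assms(2)])
  fix y :: "int list" and j
  assume "length y = length (Q!i)" and "j < length (Q!i)"
  define y' where "y' = y[j := y!j + int (Q!i!j)]"
  have peval_pad: "peval (blockC Q i C) z = peval C (pad_block Q i z)" if "length z = length (Q!i)" for z
    using peval_blockC[OF assms(1-3) length_pad_block[OF assms(1) that]] block_part_pad_block[OF that]
    by simp
  have "off Q i + j \<in> blockvars Q i" and "off Q i + j < length (concat Q)"
    using off_add_length_le[OF assms(1)] \<open>j < length (Q!i)\<close> by (auto simp: blockvars_def)
  moreover have "pad_block Q i y' = (pad_block Q i y)[off Q i + j := y!j + int (Q!i!j)]"
    using pad_block_update[of j y Q i] \<open>j < length (Q!i)\<close> \<open>length y = length (Q!i)\<close> by (simp add: y'_def)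
  moreover have "pad_block Q i y ! (off Q i + j) = y!j"
    using pad_block_nth[OF assms(1) \<open>length y = length (Q!i)\<close>] calculation by simp
  ultimately have "pad_block Q i y' = (pad_block Q i y)[off Q i + j :=
      pad_block Q i y ! (off Q i + j) + int (concat Q ! (off Q i + j))]"
    using concat_nth_blockvars[OF assms(1)] by simp
  then show "peval (blockC Q i C) (y[j := y!j + int (Q!i!j)]) = peval (blockC Q i C) y"
    using per[OF length_pad_block[OF assms(1) \<open>length y = length (Q!i)\<close>] \<open>off Q i + j < length (concat Q)\<close>]
      peval_pad \<open>length y = length (Q!i)\<close> by (simp add: y'_def)
qed

lemma peval_sum_embed_block:
  fixes D :: "nat \<Rightarrow> nat list \<Rightarrow> 'b::ab_group_add"
  assumes "\<And>i. i < length Q \<Longrightarrow> polyfract (length (Q!i)) (D i)" and "length x = length (concat Q)"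
  shows "peval (\<lambda>d. \<Sum>i<length Q. embed_block Q i (D i) d) x = (\<Sum>i<length Q. peval (D i) (block_part Q i x))"
proof -
  have "peval (\<lambda>d. \<Sum>i<length Q. embed_block Q i (D i) d) x = (\<Sum>i<length Q. peval (embed_block Q i (D i)) x)"
    using embed_block(1)[OF _ assms(1)] by (intro peval_sum) (auto simp: polyfract_def)
  also have "\<dots> = (\<Sum>i<length Q. peval (D i) (block_part Q i x))"
    using peval_embed_block[OF _ assms] by simp
  finally show ?thesis .
qed

lemma periodic_pf_sum_embed_block:
  fixes D :: "nat \<Rightarrow> nat list \<Rightarrow> 'b::ab_group_add"
  assumes per: "\<And>i. i < length Q \<Longrightarrow> periodic_pf (Q!i) (D i)"
  shows "periodic_pf (concat Q) (\<lambda>d. \<Sum>i<length Q. embed_block Q i (D i) d)"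
  unfolding periodic_pf_def
proof (intro conjI allI impI)
  have pf: "polyfract (length (Q!i)) (D i)" if "i < length Q" for i
    using per[OF that] by (simp add: periodic_pf_def)
  then show "polyfract (length (concat Q)) (\<lambda>d. \<Sum>i<length Q. embed_block Q i (D i) d)"
    using embed_block(1) by (intro polyfract_sum) auto
  fix x :: "int list" and j
  assume "length x = length (concat Q)" and "j < length (concat Q)"
  with pf per show "peval (\<lambda>d. \<Sum>i<length Q. embed_block Q i (D i) d) (x[j := x!j + int (concat Q ! j)])
      = peval (\<lambda>d. \<Sum>i<length Q. embed_block Q i (D i) d) x"
    by (intro periodic_sum_blocks[where h = "\<lambda>i. peval (D i)", OF peval_sum_embed_block])
      (auto simp: periodic_pf_def)
qed

section \<open>Primary decomposition of periodic polyfracts\<close>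

definition prime_power_blocks :: "nat list \<Rightarrow> nat list list \<Rightarrow> bool" where
  "prime_power_blocks ps Q \<longleftrightarrow> length Q = length ps \<and> (\<forall>i<length ps. \<forall>q\<in>set (Q!i). \<exists>e. q = (ps!i) ^ e)"

lemma concat_nth_prime_power:
  assumes "prime_power_blocks ps Q" and "k < length Q" and "j \<in> blockvars Q k"
  shows "\<exists>e. concat Q ! j = (ps!k) ^ e"
proof -
  have "j - off Q k < length (Q!k)"
    using assms(3) by (auto simp: blockvars_def)
  then show ?thesis
    using assms concat_nth_blockvars[OF assms(2,3)] nth_mem[of "j - off Q k" "Q!k"]
    by (auto simp: prime_power_blocks_def)
qed

lemma coordC_eq_intmul:
  fixes C :: "nat list \<Rightarrow> 'b::{ab_group_add, finite}"
  assumes "prime_cover ps (card (UNIV :: 'b set))" and "i < length ps"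
  shows "coordC ps i C = (\<lambda>d. intmul (idem_coeff (card (UNIV :: 'b set)) (ps!i)) (C d))"
  using pproj_eq_intmul_idem_coeff[OF assms] by (simp add: coordC_def)

lemma coordC_in_prim:
  fixes C :: "nat list \<Rightarrow> 'b::{ab_group_add, finite}"
  assumes "prime_cover ps (card (UNIV :: 'b set))" and "i < length ps"
  shows "coordC ps i C d \<in> prim (ps!i)"
  using assms intmul_idem_coeff_in_prim[of "ps!i" "C d"]
  by (simp add: coordC_eq_intmul prime_cover_def)

lemma polyfract_coordC:
  fixes C :: "nat list \<Rightarrow> 'b::{ab_group_add, finite}"
  assumes "prime_cover ps (card (UNIV :: 'b set))" and "i < length ps" and "polyfract n C"
  shows "polyfract n (coordC ps i C)"
  using polyfract_intmul[OF assms(3)] by (simp add: coordC_eq_intmul[OF assms(1,2)])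

lemma peval_coordC:
  fixes C :: "nat list \<Rightarrow> 'b::{ab_group_add, finite}"
  assumes "prime_cover ps (card (UNIV :: 'b set))" and "i < length ps" and "polyfract n C"
  shows "peval (coordC ps i C) x = pproj ps i (peval C x)"
proof -
  have "finite {d. C d \<noteq> 0}"
    using assms(3) by (simp add: polyfract_def)
  then show ?thesis
    by (simp add: coordC_eq_intmul[OF assms(1,2)] pproj_eq_intmul_idem_coeff[OF assms(1,2)] peval_intmul)
qed

lemma peval_eq_sum_coordC:
  fixes C :: "nat list \<Rightarrow> 'b::{ab_group_add, finite}"
  assumes ps: "prime_cover ps (card (UNIV :: 'b set))" and "polyfract n C"
  shows "peval C x = (\<Sum>i<length ps. peval (coordC ps i C) x)"
  using peval_coordC[OF ps _ assms(2)] sum_intmul_idem_coeff[OF ps]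
  by (simp add: pproj_eq_intmul_idem_coeff[OF ps])

lemma periodic_pf_coordC:
  fixes C :: "nat list \<Rightarrow> 'b::{ab_group_add, finite}"
  assumes "prime_cover ps (card (UNIV :: 'b set))" and "i < length ps" and "periodic_pf qs C"
  shows "periodic_pf qs (coordC ps i C)"
proof -
  have pf: "polyfract (length qs) C"
    using assms(3) by (simp add: periodic_pf_def)
  with assms(3) show ?thesis
    using polyfract_coordC[OF assms(1,2) pf] peval_coordC[OF assms(1,2) pf] by (simp add: periodic_pf_def)
qed

lemma peval_shift_one_if_coprime_shifts:
  fixes C :: "nat list \<Rightarrow> 'b::ab_group_add"
  assumes a: "\<And>x. length x = n \<Longrightarrow> peval C (x[j := x!j + a]) = peval C x"
    and b: "\<And>x. length x = n \<Longrightarrow> peval C (x[j := x!j + b]) = peval C x"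
    and "coprime a b" and "j < n" and "length x = n"
  shows "peval C (x[j := x!j + 1]) = peval C x"
proof -
  have shift: "peval C (x[j := s + c]) = peval C (x[j := s])"
    if "\<And>x. length x = n \<Longrightarrow> peval C (x[j := x!j + c]) = peval C x" for s c
    using that[of "x[j := s]"] \<open>j < n\<close> \<open>length x = n\<close> by simp
  have "peval C (x[j := x!j + 1]) = peval C (x[j := x!j])"
    using shift[OF a] shift[OF b] \<open>coprime a b\<close>
    by (rule periodic_coprime_imp_periodic_one[where h = "\<lambda>s. peval C (x[j := s])"])
  then show ?thesis
    by simp
qed

text \<open>The period is \<open>p\<^bsup>M+K\<^esup>\<close> with \<open>p\<^sup>K\<close> exceeding every degree in \<open>X\<^sub>j\<close>, by \<open>int_binom_shift_prime_power_cong\<close>.\<close>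
lemma peval_prime_power_periodic:
  fixes C :: "nat list \<Rightarrow> 'b::ab_group_add" and p :: nat
  assumes p: "prime p" and pf: "polyfract n C" and killed: "\<And>d. intmul (int (p ^ M)) (C d) = 0"
    and "j < n"
  shows "\<exists>N. \<forall>x. length x = n \<longrightarrow> peval C (x[j := x!j + int (p ^ N)]) = peval C x"
proof -
  define S where "S = {d. C d \<noteq> 0}"
  have "finite S"
    using pf by (simp add: polyfract_def S_def)
  define K where "K = (\<Sum>d\<in>S. Suc (d!j))"
  have degree_bound: "d!j < p ^ K" if "d \<in> S" for d
  proof -
    have "Suc (d!j) \<le> K"
      unfolding K_def by (rule member_le_sum[OF that]) (simp_all add: \<open>finite S\<close>)
    also have "K < 2 ^ K"
      by (rule less_exp)
    also have "2 ^ K \<le> p ^ K"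
      using p by (simp add: power_mono prime_ge_2_nat)
    finally show ?thesis
      by simp
  qed
  have "peval C (x[j := x!j + int (p ^ (M + K))]) = peval C x" if "length x = n" for x
    unfolding peval_monofract S_def[symmetric]
  proof (rule sum.cong[OF refl])
    fix d
    assume "d \<in> S"
    have jx: "j < length x"
      using \<open>j < n\<close> that by simp
    have "int p ^ M dvd int_binom (x!j + int (p ^ (M + K))) (d!j) - int_binom (x!j) (d!j)"
      by (rule int_binom_shift_prime_power_cong[OF p degree_bound[OF \<open>d \<in> S\<close>]]) simp
    then have "int (p ^ M) dvd monofract (x[j := x!j + int (p ^ (M + K))]) d - monofract x d"
      by (simp add: monofract_update[OF jx] monofract_split[OF jx] left_diff_distrib[symmetric])
    then show "intmul (monofract (x[j := x!j + int (p ^ (M + K))]) d) (C d) = intmul (monofract x d) (C d)"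
      by (rule intmul_cong_dvd[OF killed])
  qed
  then show ?thesis
    by blast
qed

text \<open>In a variable of another block \<open>k\<close> the evaluation is periodic both with a power of \<open>p\<^sub>k\<close> (the
  prescribed period) and with a power of \<open>p\<^sub>i\<close>, hence with period \<open>1\<close>.\<close>
lemma only_block_if_periodic_prim:
  fixes C :: "nat list \<Rightarrow> 'b::{ab_group_add, finite}"
  assumes ps: "prime_cover ps (card (UNIV :: 'b set))" and Q: "prime_power_blocks ps Q"
    and "i < length ps" and per: "periodic_pf (concat Q) C" and prim: "\<And>d. C d \<in> prim (ps!i)"
  shows "only_block Q i C"
  unfolding only_block_def
proof (intro allI impI)
  fix d j
  assume "C d \<noteq> 0" and "j < length d" and "j \<notin> blockvars Q i"
  define n where "n = length (concat Q)"
  have pf: "polyfract n C"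
    using per by (simp add: periodic_pf_def n_def)
  have prime: "prime (ps!l)" if "l < length ps" for l
    using ps that by (simp add: prime_cover_def)
  have "j < n"
    using pf \<open>C d \<noteq> 0\<close> \<open>j < length d\<close> by (simp add: polyfract_def)
  then obtain k where "k < length Q" and "j \<in> blockvars Q k"
    using blockvars_exists[of j Q] by (auto simp: n_def)
  with \<open>j \<notin> blockvars Q i\<close> Q have "k \<noteq> i" and "k < length ps"
    by (auto simp: prime_power_blocks_def)
  obtain e where e: "concat Q ! j = (ps!k) ^ e"
    using concat_nth_prime_power[OF Q \<open>k < length Q\<close> \<open>j \<in> blockvars Q k\<close>] by blast
  have "intmul (int (ps!i ^ multiplicity (ps!i) (card (UNIV :: 'b set)))) (C d') = 0" for d'
    using prim[of d'] prim_iff_intmul_ppart[OF prime[OF \<open>i < length ps\<close>], of "C d'"]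
    by (simp add: ppart_def)
  then obtain N where N: "\<And>x. length x = n \<Longrightarrow> peval C (x[j := x!j + int (ps!i ^ N)]) = peval C x"
    using peval_prime_power_periodic[OF prime[OF \<open>i < length ps\<close>] pf _ \<open>j < n\<close>] by blast
  have "coprime (int ((ps!k) ^ e)) (int ((ps!i) ^ N))"
    using ps \<open>k \<noteq> i\<close> \<open>k < length ps\<close> \<open>i < length ps\<close> primes_coprime[OF prime prime]
    by (simp add: prime_cover_def nth_eq_iff_index_eq)
  moreover have "peval C (x[j := x!j + int ((ps!k) ^ e)]) = peval C x" if "length x = n" for x
    using per \<open>j < n\<close> that unfolding periodic_pf_def n_def[symmetric] e[symmetric] by blast
  ultimately have "peval C (x[j := x!j + 1]) = peval C x" if "length x = n" for x
    using peval_shift_one_if_coprime_shifts[OF _ N _ \<open>j < n\<close> that] by blast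
  then show "d!j = 0"
    using invariant_imp_var_absent[OF pf \<open>j < n\<close> _ \<open>C d \<noteq> 0\<close>] by blast
qed

lemma peval_eq_sum_blockC:
  fixes C :: "nat list \<Rightarrow> 'b::{ab_group_add, finite}"
  assumes ps: "prime_cover ps (card (UNIV :: 'b set))" and Q: "prime_power_blocks ps Q"
    and pf: "polyfract (length (concat Q)) C" and "\<forall>i<length ps. only_block Q i (coordC ps i C)"
    and "length x = length (concat Q)"
  shows "peval C x = (\<Sum>i<length Q. peval (blockC Q i (coordC ps i C)) (block_part Q i x))"
proof -
  have "peval C x = (\<Sum>i<length ps. peval (coordC ps i C) x)"
    by (rule peval_eq_sum_coordC[OF ps pf])
  also have "\<dots> = (\<Sum>i<length Q. peval (blockC Q i (coordC ps i C)) (block_part Q i x))"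
    using Q assms(4,5)
    by (auto simp: prime_power_blocks_def intro!: sum.cong peval_blockC[symmetric] polyfract_coordC[OF ps _ pf])
  finally show ?thesis .
qed

lemma periodic_pf_iff_blocks:
  fixes C :: "nat list \<Rightarrow> 'b::{ab_group_add, finite}"
  assumes ps: "prime_cover ps (card (UNIV :: 'b set))" and Q: "prime_power_blocks ps Q"
    and pf: "polyfract (length (concat Q)) C"
  shows "periodic_pf (concat Q) C \<longleftrightarrow>
    (\<forall>i<length ps. only_block Q i (coordC ps i C) \<and> periodic_pf (Q!i) (blockC Q i (coordC ps i C)))"
proof (intro iffI allI impI conjI)
  fix i
  assume "periodic_pf (concat Q) C" and "i < length ps"
  then have per: "periodic_pf (concat Q) (coordC ps i C)"
    using periodic_pf_coordC[OF ps] by blast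
  then show only: "only_block Q i (coordC ps i C)"
    using only_block_if_periodic_prim[OF ps Q \<open>i < length ps\<close>] coordC_in_prim[OF ps \<open>i < length ps\<close>] by blast
  show "periodic_pf (Q!i) (blockC Q i (coordC ps i C))"
    using per only Q \<open>i < length ps\<close> by (intro periodic_blockC) (simp_all add: periodic_pf_def prime_power_blocks_def)
next
  assume blocks: "\<forall>i<length ps. only_block Q i (coordC ps i C) \<and> periodic_pf (Q!i) (blockC Q i (coordC ps i C))"
  show "periodic_pf (concat Q) C"
    unfolding periodic_pf_def
  proof (intro conjI allI impI)
    fix x :: "int list" and j
    assume "length x = length (concat Q)" and "j < length (concat Q)"
    have "peval C y = (\<Sum>i<length Q. peval (blockC Q i (coordC ps i C)) (block_part Q i y))"
      if "length y = length (concat Q)" for y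
      using blocks that by (intro peval_eq_sum_blockC[OF ps Q pf]) auto
    then show "peval C (x[j := x!j + int (concat Q ! j)]) = peval C x"
      by (rule periodic_sum_blocks)
        (use blocks Q \<open>length x = length (concat Q)\<close> \<open>j < length (concat Q)\<close> in
          \<open>auto simp: periodic_pf_def prime_power_blocks_def\<close>)
  qed (rule pf)
qed

lemma periodic_pf_induces_block_sum:
  fixes C :: "nat list \<Rightarrow> 'b::{ab_group_add, finite}"
  assumes ps: "prime_cover ps (card (UNIV :: 'b set))" and Q: "prime_power_blocks ps Q"
    and per: "periodic_pf (concat Q) C"
  shows "\<exists>fs :: (int list \<Rightarrow> 'b) list. length fs = length ps
    \<and> (\<forall>i<length ps. \<forall>a\<in>Arep (Q!i). (fs!i) a \<in> prim (ps!i))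
    \<and> restrict (peval C) (Arep (concat Q)) = restrict (\<lambda>x. \<Sum>i<length ps. (fs!i) (blockx Q i x)) (Arep (concat Q))"
proof -
  define fs where "fs = map (\<lambda>i. peval (blockC Q i (coordC ps i C))) [0..<length ps]"
  have pf: "polyfract (length (concat Q)) C"
    using per by (simp add: periodic_pf_def)
  have "(fs!i) a \<in> prim (ps!i)" if "i < length ps" for i a
  proof -
    have "blockC Q i (coordC ps i C) d \<in> prim (ps!i)" for d
      using coordC_in_prim[OF ps that] by (simp add: blockC_eq zero_in_prim)
    with that ps show ?thesis
      by (simp add: fs_def peval_in_prim prime_cover_def)
  qed
  moreover have "peval C x = (\<Sum>i<length ps. (fs!i) (blockx Q i x))" if "length x = length (concat Q)" for x
    using peval_eq_sum_blockC[OF ps Q pf _ that] periodic_pf_iff_blocks[OF ps Q pf] per Q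
    by (simp add: fs_def prime_power_blocks_def)
  then have "restrict (peval C) (Arep (concat Q)) = restrict (\<lambda>x. \<Sum>i<length ps. (fs!i) (blockx Q i x)) (Arep (concat Q))"
    by (intro restrict_ext) (simp add: Arep_def)
  moreover have "length fs = length ps"
    by (simp add: fs_def)
  ultimately show ?thesis
    by blast
qed

lemma block_sum_induced_by_periodic_pf:
  fixes fs :: "(int list \<Rightarrow> 'b::{ab_group_add, finite}) list"
  assumes ps: "prime_cover ps (card (UNIV :: 'b set))" and Q: "prime_power_blocks ps Q"
    and "length fs = length ps" and fs: "\<forall>i<length ps. \<forall>a\<in>Arep (Q!i). (fs!i) a \<in> prim (ps!i)"
  shows "\<exists>C. periodic_pf (concat Q) C
    \<and> restrict (peval C) (Arep (concat Q)) = restrict (\<lambda>x. \<Sum>i<length ps. (fs!i) (blockx Q i x)) (Arep (concat Q))"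
proof -
  have lenQ: "length Q = length ps"
    using Q by (simp add: prime_power_blocks_def)
  have "\<forall>i<length Q. \<exists>D :: nat list \<Rightarrow> 'b. periodic_pf (Q!i) D \<and> (\<forall>a\<in>Arep (Q!i). peval D a = (fs!i) a)"
  proof (intro allI impI)
    fix i
    assume "i < length Q"
    with ps Q fs show "\<exists>D :: nat list \<Rightarrow> 'b. periodic_pf (Q!i) D \<and> (\<forall>a\<in>Arep (Q!i). peval D a = (fs!i) a)"
      by (intro periodic_pf_interpolates[of "ps!i" "Q!i" "fs!i"]) (simp_all add: prime_cover_def prime_power_blocks_def)
  qed
  then obtain D :: "nat \<Rightarrow> nat list \<Rightarrow> 'b" where D: "\<And>i. i < length Q \<Longrightarrow>
      periodic_pf (Q!i) (D i) \<and> (\<forall>a\<in>Arep (Q!i). peval (D i) a = (fs!i) a)"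
    by metis
  define C where "C = (\<lambda>d. \<Sum>i<length Q. embed_block Q i (D i) d)"
  have "periodic_pf (concat Q) C"
    unfolding C_def using D by (intro periodic_pf_sum_embed_block) blast
  moreover have "peval C x = (\<Sum>i<length ps. (fs!i) (blockx Q i x))" if "x \<in> Arep (concat Q)" for x
    using peval_sum_embed_block[of Q D x] that D block_part_Arep[OF _ that] lenQ
    by (simp add: C_def Arep_def periodic_pf_def)
  then have "restrict (peval C) (Arep (concat Q))
      = restrict (\<lambda>x. \<Sum>i<length ps. (fs!i) (blockx Q i x)) (Arep (concat Q))"
    by (rule restrict_ext)
  ultimately show ?thesis
    by blast
qed

lemma periodic_maps_eq_block_maps:
  fixes ps :: "nat list" and Q :: "nat list list"
  assumes ps: "prime_cover ps (card (UNIV :: 'b::{ab_group_add, finite} set))"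
    and Q: "prime_power_blocks ps Q"
  shows "{restrict (peval C) (Arep (concat Q)) | C :: nat list \<Rightarrow> 'b. periodic_pf (concat Q) C}
      = {restrict g (Arep (concat Q)) | g :: int list \<Rightarrow> 'b. \<exists>fs :: (int list \<Rightarrow> 'b) list. length fs = length ps \<and>
           (\<forall>i<length ps. \<forall>a \<in> Arep (Q!i). (fs!i) a \<in> prim (ps!i)) \<and>
           (\<forall>x. g x = (\<Sum>i<length ps. (fs!i) (blockx Q i x)))}" (is "?L = ?R")
proof (intro set_eqI iffI)
  fix F
  assume "F \<in> ?L"
  then obtain C where "F = restrict (peval C) (Arep (concat Q))" and "periodic_pf (concat Q) C"
    by blast
  then obtain fs :: "(int list \<Rightarrow> 'b) list" where "length fs = length ps"
    and "\<forall>i<length ps. \<forall>a\<in>Arep (Q!i). (fs!i) a \<in> prim (ps!i)"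
    and "F = restrict (\<lambda>x. \<Sum>i<length ps. (fs!i) (blockx Q i x)) (Arep (concat Q))"
    using periodic_pf_induces_block_sum[OF ps Q \<open>periodic_pf (concat Q) C\<close>] by blast
  then show "F \<in> ?R"
    by (intro CollectI exI[of _ "\<lambda>x. \<Sum>i<length ps. (fs!i) (blockx Q i x)"] conjI exI[of _ fs]) simp_all
next
  fix F
  assume "F \<in> ?R"
  then obtain g fs where "F = restrict g (Arep (concat Q))" and len: "length fs = length ps"
    and prim: "\<forall>i<length ps. \<forall>a \<in> Arep (Q!i). (fs!i) a \<in> prim (ps!i)"
    and g: "\<forall>x. g x = (\<Sum>i<length ps. (fs!i) (blockx Q i x))"
    by blast
  moreover obtain C where C: "periodic_pf (concat Q) C"
    and "restrict (peval C) (Arep (concat Q)) = restrict (\<lambda>x. \<Sum>i<length ps. (fs!i) (blockx Q i x)) (Arep (concat Q))"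
    using block_sum_induced_by_periodic_pf[OF ps Q len prim] by blast
  moreover have "g = (\<lambda>x. \<Sum>i<length ps. (fs!i) (blockx Q i x))"
    using g by (simp add: fun_eq_iff)
  ultimately have "F = restrict (peval C) (Arep (concat Q))"
    by simp
  with C show "F \<in> ?L"
    by blast
qed

theorem theorem3p15:
  fixes ps :: "nat list" and Q :: "nat list list"
  assumes "distinct ps"
    and "length Q = length ps"
    and "set ps = {p. prime p \<and> p dvd (prod_list (concat Q) * card (UNIV :: 'b::{ab_group_add, finite} set))}"
    and "\<forall>i<length ps. \<forall>q\<in>set (Q!i). \<exists>e. q = (ps!i) ^ e"
  shows "(\<forall>C :: nat list \<Rightarrow> 'b. polyfract (length (concat Q)) C \<longrightarrow>
            (periodic_pf (concat Q) C \<longleftrightarrow>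
              (\<forall>i<length ps. only_block Q i (coordC ps i C) \<and>
                 periodic_pf (Q!i) (blockC Q i (coordC ps i C)))))
      \<and> {restrict (peval C) (Arep (concat Q)) | C :: nat list \<Rightarrow> 'b. periodic_pf (concat Q) C}
        = {restrict g (Arep (concat Q)) | g :: int list \<Rightarrow> 'b.
             \<exists>fs :: (int list \<Rightarrow> 'b) list. length fs = length ps \<and>
               (\<forall>i<length ps. \<forall>a \<in> Arep (Q!i). (fs!i) a \<in> prim (ps!i)) \<and>
               (\<forall>x. g x = (\<Sum>i<length ps. (fs!i) (blockx Q i x)))}"
proof -
  have ps: "prime_cover ps (card (UNIV :: 'b set))"
    using assms(1,3) by (auto simp: prime_cover_def)
  have Q: "prime_power_blocks ps Q"
    using assms(2,4) by (simp add: prime_power_blocks_def)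
  show ?thesis
  proof (intro conjI allI impI)
    fix C :: "nat list \<Rightarrow> 'b"
    assume "polyfract (length (concat Q)) C"
    then show "periodic_pf (concat Q) C \<longleftrightarrow>
        (\<forall>i<length ps. only_block Q i (coordC ps i C) \<and> periodic_pf (Q!i) (blockC Q i (coordC ps i C)))"
      by (rule periodic_pf_iff_blocks[OF ps Q])
  qed (rule periodic_maps_eq_block_maps[OF ps Q])
qed

end
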